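(* Let $0<\alpha\le2$, $j\ne0$, $V\in C^2(\mathbb{T})$, and let $G\in C^2(\mathbb{T})$ satisfy (M). Let $(G_n)_{n\in\mathbb{N}}\subset C^2(\mathbb{T})$ with $\|G_n-G\|_{C^2(\mathbb{T})}\to0$, and suppose that for each $n$ problem (P) with kernel $G_n$ has a solution $(m_n,\overline{H}_n)$. Then there exists $(m,\overline{H})\in C^2(\mathbb{T})\times\mathbb{R}$ such that $\|m_n-m\|_{C^2(\mathbb{T})}\to0$ and $\overline{H}_n\to\overline{H}$ along the whole sequence, and $(m,\overline{H})$ solves problem (P) with kernel $G$.
   Context: $\mathbb{T}=\mathbb{R}/\mathbb{Z}$. Problem (P) with kernel $K\in C^2(\mathbb{T})$: find $(m,\overline{H})\in C(\mathbb{T})\times\mathbb{R}$ with $m>0$ on $\mathbb{T}$, $\int_{\mathbb{T}}m=1$, and $\frac{j^2}{2m(x)^\alpha}+V(x)=\int_{\mathbb{T}}K(x-y)m(y)\,dy+\overline{H}$ for all $x\in\mathbb{T}$. Condition (M): $\int_{\mathbb{T}^2}G(x-y)f(x)f(y)\,dx\,dy\ge0$ for all $f\in C(\mathbb{T})$. *)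

theory Defs
  imports "HOL-Analysis.Analysis"
begin

text \<open>Functions on the torus T = R/Z are represented as 1-periodic functions real => real.\<close>

definition periodic1 :: "(real \<Rightarrow> real) \<Rightarrow> bool" where
  "periodic1 f \<longleftrightarrow> (\<forall>x. f (x + 1) = f x)"

definition CT :: "(real \<Rightarrow> real) \<Rightarrow> bool" where
  "CT f \<longleftrightarrow> periodic1 f \<and> continuous_on UNIV f"

definition C2T :: "(real \<Rightarrow> real) \<Rightarrow> bool" where
  "C2T f \<longleftrightarrow> periodic1 f
     \<and> (\<forall>x. (f has_real_derivative deriv f x) (at x))
     \<and> (\<forall>x. (deriv f has_real_derivative deriv (deriv f) x) (at x))
     \<and> continuous_on UNIV (deriv (deriv f))"

definition supnorm :: "(real \<Rightarrow> real) \<Rightarrow> real" where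
  "supnorm f = (SUP x. \<bar>f x\<bar>)"

definition C2norm :: "(real \<Rightarrow> real) \<Rightarrow> real" where
  "C2norm f = supnorm f + supnorm (deriv f) + supnorm (deriv (deriv f))"

definition convT :: "(real \<Rightarrow> real) \<Rightarrow> (real \<Rightarrow> real) \<Rightarrow> real \<Rightarrow> real" where
  "convT K m x = integral {0..1} (\<lambda>y. K (x - y) * m y)"

definition solvesP :: "real \<Rightarrow> real \<Rightarrow> (real \<Rightarrow> real) \<Rightarrow> (real \<Rightarrow> real)
                        \<Rightarrow> (real \<Rightarrow> real) \<Rightarrow> real \<Rightarrow> bool" where
  "solvesP \<alpha> j V K m H \<longleftrightarrow> CT m \<and> (\<forall>x. m x > 0) \<and> integral {0..1} m = 1
     \<and> (\<forall>x. j\<^sup>2 / (2 * m x powr \<alpha>) + V x = convT K m x + H)"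

definition condM :: "(real \<Rightarrow> real) \<Rightarrow> bool" where
  "condM G \<longleftrightarrow> (\<forall>f. CT f \<longrightarrow>
     integral {0..1} (\<lambda>x. integral {0..1} (\<lambda>y. G (x - y) * f x * f y)) \<ge> 0)"

end

(*
  Write R = K * m + H - V for the effective potential of a solution, so that (P) says
  m = (j^2 / (2 R)) powr (1 / alpha).  Uniform C^2 bounds on the kernels give uniform bounds
  0 < lo <= R_n <= hi: from above because m_n >= 1 somewhere, from below because near a minimum
  of R_n the density would be at least a multiple of 1 / |x - x_1| and could not have mass 1.
  Testing the difference of two equations against m_n - m_k, condition (M) makes the interaction
  term nonnegative, and the strong monotonicity of m |-> m powr -alpha bounds the L^1 distance of
  the densities by the kernel errors.  The mass constraint then controls H_n - H_k, and the
  explicit formula for m_n in terms of R_n controls the sup distance, so (m_n, H_n) is Cauchy.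
  The limit solves (P) with kernel G, and the C^2 convergence follows from the formulas for
  m' and m'' in terms of R, R' and R''.
*)

theory Submission
  imports Defs
begin

lemma periodic1_add_of_int:
  assumes "periodic1 f"
  shows "f (x + of_int k) = f x"
proof (induction k rule: int_induct[where k = 0])
  case base
  then show ?case by simp
next
  case (step1 i)
  have "f (x + of_int (i + 1)) = f ((x + of_int i) + 1)" by (simp add: algebra_simps)
  then show ?case using assms step1.IH by (simp add: periodic1_def)
next
  case (step2 i)
  have "f (x + of_int (i - 1)) = f (x + of_int (i - 1) + 1)"
    using assms[unfolded periodic1_def, rule_format, of "x + of_int (i - 1)"] by (rule sym)
  also have "x + of_int (i - 1) + 1 = x + of_int i" by simp
  finally show ?case using step2.IH by simp
qed

lemma periodic1_frac: "periodic1 f \<Longrightarrow> f (frac x) = f x"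
  using periodic1_add_of_int[of f "frac x" "\<lfloor>x\<rfloor>"] by (simp add: frac_def)

lemma frac_in_unit_interval: "frac x \<in> {0..1}"
  using frac_ge_0[of x] frac_lt_1[of x] by simp

lemma periodic1_bounded:
  assumes "periodic1 f" "continuous_on UNIV f"
  obtains B where "\<And>x. \<bar>f x\<bar> \<le> B"
proof -
  have "compact (f ` {0..1})"
    using assms(2) by (intro compact_continuous_image) (auto intro: continuous_on_subset)
  then obtain B where B: "\<And>y. y \<in> f ` {0..1} \<Longrightarrow> norm y \<le> B"
    using compact_imp_bounded bounded_iff by metis
  have "\<bar>f x\<bar> \<le> B" for x
  proof -
    have "f (frac x) \<in> f ` {0..1}" using frac_in_unit_interval by blast
    then show ?thesis using B periodic1_frac[OF assms(1)] by simp
  qed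
  then show thesis by (rule that)
qed

lemma periodic1_attains_min:
  assumes "periodic1 f" "continuous_on UNIV f"
  obtains x0 where "x0 \<in> {0..1}" "\<And>x. f x0 \<le> f x"
proof -
  obtain x0 where x0: "x0 \<in> {0..1}" "\<And>y. y \<in> {0..1} \<Longrightarrow> f x0 \<le> f y"
    using continuous_attains_inf[OF compact_Icc _ continuous_on_subset[OF assms(2)], of 0 1] by auto
  have "f x0 \<le> f x" for x
    using x0(2)[OF frac_in_unit_interval] periodic1_frac[OF assms(1)] by simp
  with x0(1) show thesis by (rule that)
qed

lemma periodic1_deriv:
  assumes "periodic1 f" "\<And>x. (f has_real_derivative f' x) (at x)"
  shows "periodic1 f'"
  unfolding periodic1_def
proof
  fix x
  have "((\<lambda>x. f (x + 1)) has_real_derivative f' (x + 1)) (at x)"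
    using assms(2)[of "x + 1"] by (simp add: DERIV_shift)
  moreover have "(\<lambda>x. f (x + 1)) = f" using assms(1) unfolding periodic1_def by (intro ext) simp
  ultimately show "f' (x + 1) = f' x" using DERIV_unique assms(2) by metis
qed

lemma C2T_D:
  assumes "C2T f"
  shows "periodic1 f" "periodic1 (deriv f)" "periodic1 (deriv (deriv f))"
    "continuous_on UNIV f" "continuous_on UNIV (deriv f)" "continuous_on UNIV (deriv (deriv f))"
    "\<And>x. (f has_real_derivative deriv f x) (at x)"
    "\<And>x. (deriv f has_real_derivative deriv (deriv f) x) (at x)"
proof -
  show p: "periodic1 f" and d1: "\<And>x. (f has_real_derivative deriv f x) (at x)"
    and d2: "\<And>x. (deriv f has_real_derivative deriv (deriv f) x) (at x)"
    and "continuous_on UNIV (deriv (deriv f))" using assms by (auto simp: C2T_def)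
  show p1: "periodic1 (deriv f)" using periodic1_deriv[OF p d1] .
  show "periodic1 (deriv (deriv f))" using periodic1_deriv[OF p1 d2] .
  show "continuous_on UNIV f" "continuous_on UNIV (deriv f)"
    using d1 d2 by (auto intro!: continuous_at_imp_continuous_on DERIV_isCont)
qed

lemma C2T_diff:
  assumes "C2T f" "C2T g"
  shows "C2T (\<lambda>x. f x - g x)"
    and "deriv (\<lambda>x. f x - g x) = (\<lambda>x. deriv f x - deriv g x)"
    and "deriv (\<lambda>x. deriv f x - deriv g x) = (\<lambda>x. deriv (deriv f) x - deriv (deriv g) x)"
proof -
  note f = C2T_D[OF assms(1)] and g = C2T_D[OF assms(2)]
  have d1: "((\<lambda>x. f x - g x) has_real_derivative deriv f x - deriv g x) (at x)" for x
    using f(7) g(7) by (rule DERIV_diff)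
  show e1: "deriv (\<lambda>x. f x - g x) = (\<lambda>x. deriv f x - deriv g x)"
    using d1 DERIV_imp_deriv by blast
  have d2: "((\<lambda>x. deriv f x - deriv g x) has_real_derivative deriv (deriv f) x - deriv (deriv g) x) (at x)" for x
    using f(8) g(8) by (rule DERIV_diff)
  show e2: "deriv (\<lambda>x. deriv f x - deriv g x) = (\<lambda>x. deriv (deriv f) x - deriv (deriv g) x)"
    using d2 DERIV_imp_deriv by blast
  have "periodic1 (\<lambda>x. f x - g x)" using f(1) g(1) by (simp add: periodic1_def)
  moreover have "continuous_on UNIV (\<lambda>x. deriv (deriv f) x - deriv (deriv g) x)"
    by (intro continuous_on_diff f(6) g(6))
  ultimately show "C2T (\<lambda>x. f x - g x)"
    unfolding C2T_def e1 e2 using d1 d2 by simp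
qed

lemma C2T_bounded:
  assumes "C2T f"
  obtains B where "\<And>x. \<bar>f x\<bar> \<le> B" "\<And>x. \<bar>deriv f x\<bar> \<le> B" "\<And>x. \<bar>deriv (deriv f) x\<bar> \<le> B"
proof -
  note f = C2T_D[OF assms]
  obtain B0 B1 B2 where "\<And>x. \<bar>f x\<bar> \<le> B0" "\<And>x. \<bar>deriv f x\<bar> \<le> B1" "\<And>x. \<bar>deriv (deriv f) x\<bar> \<le> B2"
    using periodic1_bounded f(1-6) by metis
  then show thesis by (intro that[of "max B0 (max B1 B2)"]) (simp_all add: le_max_iff_disj)
qed

lemma abs_le_supnorm:
  assumes "\<And>x. \<bar>f x\<bar> \<le> B"
  shows "\<bar>f x\<bar> \<le> supnorm f"
  unfolding supnorm_def using assms by (intro cSUP_upper bdd_aboveI2) auto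

lemma supnorm_nonneg:
  assumes "\<And>x. \<bar>f x\<bar> \<le> B"
  shows "0 \<le> supnorm f"
  using abs_le_supnorm[of f B 0, OF assms] by linarith

lemma supnorm_le:
  assumes "\<And>x. \<bar>f x\<bar> \<le> B"
  shows "supnorm f \<le> B"
  unfolding supnorm_def using assms by (intro cSUP_least) auto

lemma abs_le_C2norm:
  assumes "C2T h"
  shows "\<bar>h x\<bar> \<le> C2norm h" "\<bar>deriv h x\<bar> \<le> C2norm h" "\<bar>deriv (deriv h) x\<bar> \<le> C2norm h"
proof -
  obtain B where B: "\<And>x. \<bar>h x\<bar> \<le> B" "\<And>x. \<bar>deriv h x\<bar> \<le> B" "\<And>x. \<bar>deriv (deriv h) x\<bar> \<le> B"
    using C2T_bounded[OF assms] by blast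
  show "\<bar>h x\<bar> \<le> C2norm h" "\<bar>deriv h x\<bar> \<le> C2norm h" "\<bar>deriv (deriv h) x\<bar> \<le> C2norm h"
    using abs_le_supnorm[of h B x, OF B(1)] abs_le_supnorm[of "deriv h" B x, OF B(2)]
      abs_le_supnorm[of "deriv (deriv h)" B x, OF B(3)]
      supnorm_nonneg[of h B, OF B(1)] supnorm_nonneg[of "deriv h" B, OF B(2)]
      supnorm_nonneg[of "deriv (deriv h)" B, OF B(3)]
    unfolding C2norm_def by linarith+
qed

lemma abs_diff_le_C2norm:
  assumes "C2T f" "C2T g"
  shows "\<bar>f x - g x\<bar> \<le> C2norm (\<lambda>x. f x - g x)"
    "\<bar>deriv f x - deriv g x\<bar> \<le> C2norm (\<lambda>x. f x - g x)"
    "\<bar>deriv (deriv f) x - deriv (deriv g) x\<bar> \<le> C2norm (\<lambda>x. f x - g x)"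
  using abs_le_C2norm[OF C2T_diff(1)[OF assms], of x] by (simp_all add: C2T_diff(2,3)[OF assms])

lemma uniform_limit_of_abs_le:
  fixes fs :: "nat \<Rightarrow> real \<Rightarrow> real"
  assumes "\<And>n x. \<bar>fs n x - f x\<bar> \<le> e n" "e \<longlonglongrightarrow> 0"
  shows "uniform_limit UNIV fs f sequentially"
proof (rule uniform_limitI)
  fix r :: real assume "0 < r"
  then have "\<forall>\<^sub>F n in sequentially. e n < r"
    using order_tendstoD(2)[OF assms(2)] by simp
  then show "\<forall>\<^sub>F n in sequentially. \<forall>x\<in>UNIV. dist (fs n x) (f x) < r"
    by eventually_elim (auto simp: dist_real_def intro: order.strict_trans1[OF assms(1)])
qed

lemma C2norm_tendsto_zero_imp_uniform_limit:
  assumes fs: "\<And>n. C2T (fs n)" and f: "C2T f"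
    and lim: "(\<lambda>n. C2norm (\<lambda>x. fs n x - f x)) \<longlonglongrightarrow> 0"
  shows "uniform_limit UNIV fs f sequentially"
    "uniform_limit UNIV (\<lambda>n. deriv (fs n)) (deriv f) sequentially"
    "uniform_limit UNIV (\<lambda>n. deriv (deriv (fs n))) (deriv (deriv f)) sequentially"
  by (intro uniform_limit_of_abs_le[where e = "\<lambda>n. C2norm (\<lambda>x. fs n x - f x)", OF _ lim]
      abs_diff_le_C2norm[OF fs f])+

lemma uniform_limit_imp_C2norm_tendsto_zero:
  assumes fs: "\<And>n. C2T (fs n)" and f: "C2T f"
    and "uniform_limit UNIV fs f sequentially"
    and "uniform_limit UNIV (\<lambda>n. deriv (fs n)) (deriv f) sequentially"
    and "uniform_limit UNIV (\<lambda>n. deriv (deriv (fs n))) (deriv (deriv f)) sequentially"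
  shows "(\<lambda>n. C2norm (\<lambda>x. fs n x - f x)) \<longlonglongrightarrow> 0"
proof (rule LIMSEQ_I)
  fix r :: real assume r: "0 < r"
  then have r4: "0 < r / 4" by simp
  have "\<forall>\<^sub>F n in sequentially. \<forall>x. \<bar>fs n x - f x\<bar> < r / 4
      \<and> \<bar>deriv (fs n) x - deriv f x\<bar> < r / 4 \<and> \<bar>deriv (deriv (fs n)) x - deriv (deriv f) x\<bar> < r / 4"
    using uniform_limitD[OF assms(3) r4] uniform_limitD[OF assms(4) r4] uniform_limitD[OF assms(5) r4]
    by eventually_elim (simp add: dist_real_def)
  then obtain N where N: "\<And>n x. n \<ge> N \<Longrightarrow> \<bar>fs n x - f x\<bar> < r / 4
      \<and> \<bar>deriv (fs n) x - deriv f x\<bar> < r / 4 \<and> \<bar>deriv (deriv (fs n)) x - deriv (deriv f) x\<bar> < r / 4"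
    unfolding eventually_sequentially by blast
  have "norm (C2norm (\<lambda>x. fs n x - f x) - 0) < r" if "n \<ge> N" for n
  proof -
    have "\<bar>fs n x - f x\<bar> \<le> r / 4" "\<bar>deriv (fs n) x - deriv f x\<bar> \<le> r / 4"
      "\<bar>deriv (deriv (fs n)) x - deriv (deriv f) x\<bar> \<le> r / 4" for x
      using N[OF that, of x] by simp_all
    note bounds = this
    have "C2norm (\<lambda>x. fs n x - f x) \<le> r / 4 + r / 4 + r / 4"
      unfolding C2norm_def C2T_diff(2,3)[OF fs f]
      by (intro add_mono supnorm_le bounds)
    moreover have "0 \<le> C2norm (\<lambda>x. fs n x - f x)"
      using abs_le_C2norm(1)[OF C2T_diff(1)[OF fs f], of n 0] by linarith
    ultimately show ?thesis using r by simp
  qed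
  then show "\<exists>N. \<forall>n\<ge>N. norm (C2norm (\<lambda>x. fs n x - f x) - 0) < r" by blast
qed

lemma continuous_on_reflect:
  fixes K :: "real \<Rightarrow> real"
  assumes "continuous_on UNIV K"
  shows "continuous_on S (\<lambda>y. K (x - y))"
  using continuous_on_compose2[OF assms continuous_on_diff[OF continuous_on_const continuous_on_id]]
  by simp

lemma convT_integrand_integrable:
  fixes K m :: "real \<Rightarrow> real"
  assumes "continuous_on UNIV K" "continuous_on UNIV m"
  shows "(\<lambda>y. K (x - y) * m y) integrable_on {0..1}"
  by (intro integrable_continuous_interval continuous_on_mult continuous_on_reflect[OF assms(1)]
      continuous_on_subset[OF assms(2) subset_UNIV])

lemma integrable_unit_of_continuous:
  fixes f :: "real \<Rightarrow> real"
  shows "continuous_on UNIV f \<Longrightarrow> f integrable_on {0..1}"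
  by (rule integrable_continuous_interval, erule continuous_on_subset) simp

lemma convT_abs_le:
  assumes "continuous_on UNIV K" "continuous_on UNIV m" "\<And>z. \<bar>K z\<bar> \<le> B"
  shows "\<bar>convT K m x\<bar> \<le> B * integral {0..1} (\<lambda>y. \<bar>m y\<bar>)"
proof -
  have "norm (integral {0..1} (\<lambda>y. K (x - y) * m y)) \<le> integral {0..1} (\<lambda>y. B * \<bar>m y\<bar>)"
  proof (rule integral_norm_bound_integral)
    show "(\<lambda>y. K (x - y) * m y) integrable_on {0..1}" by (rule convT_integrand_integrable[OF assms(1,2)])
    show "(\<lambda>y. B * \<bar>m y\<bar>) integrable_on {0..1}"
      by (intro integrable_unit_of_continuous continuous_on_mult continuous_on_rabs assms(2) continuous_on_const)
    fix y show "norm (K (x - y) * m y) \<le> B * \<bar>m y\<bar>"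
      using assms(3)[of "x - y"] by (simp add: abs_mult mult_right_mono)
  qed
  then show ?thesis unfolding convT_def by simp
qed

lemma convT_abs_le_density:
  assumes "continuous_on UNIV K" "continuous_on UNIV m" "\<And>z. \<bar>K z\<bar> \<le> B"
    and "\<And>y. 0 \<le> m y" "integral {0..1} m = 1"
  shows "\<bar>convT K m x\<bar> \<le> B"
  using convT_abs_le[OF assms(1-3), of x] assms(4,5) by simp

lemma convT_abs_le_sup:
  assumes "continuous_on UNIV K" "continuous_on UNIV m" "\<And>z. \<bar>K z\<bar> \<le> B" "\<And>y. \<bar>m y\<bar> \<le> e"
  shows "\<bar>convT K m x\<bar> \<le> B * e"
proof -
  have "integral {0..1} (\<lambda>y. \<bar>m y\<bar>) \<le> integral {0..1::real} (\<lambda>y. e)"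
    using assms(4) by (intro Henstock_Kurzweil_Integration.integral_le integrable_unit_of_continuous
        continuous_on_rabs assms(2) continuous_on_const) auto
  moreover have "0 \<le> B" using assms(3)[of 0] by simp
  ultimately have "B * integral {0..1} (\<lambda>y. \<bar>m y\<bar>) \<le> B * e"
    by (simp add: mult_left_mono)
  with convT_abs_le[OF assms(1-3), of x] show ?thesis by linarith
qed

lemma convT_diff_left:
  assumes "continuous_on UNIV K1" "continuous_on UNIV K2" "continuous_on UNIV m"
  shows "convT (\<lambda>z. K1 z - K2 z) m x = convT K1 m x - convT K2 m x"
  unfolding convT_def left_diff_distrib
  by (intro integral_diff convT_integrand_integrable assms)

lemma convT_diff_right:
  assumes "continuous_on UNIV K" "continuous_on UNIV m1" "continuous_on UNIV m2"
  shows "convT K (\<lambda>y. m1 y - m2 y) x = convT K m1 x - convT K m2 x"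
  unfolding convT_def right_diff_distrib
  by (intro integral_diff convT_integrand_integrable assms)

lemma periodic1_convT:
  assumes "periodic1 K"
  shows "periodic1 (convT K m)"
proof -
  have "K (x + 1 - y) = K (x - y)" for x y
    using assms unfolding periodic1_def by (metis add.commute add_diff_eq)
  then show ?thesis unfolding periodic1_def convT_def by simp
qed

lemma continuous_on_convT:
  assumes "continuous_on UNIV K" "continuous_on UNIV m"
  shows "continuous_on UNIV (convT K m)"
proof -
  have "continuous_on (UNIV \<times> cbox 0 1) (\<lambda>(x, y). K (x - y) * m y)"
    unfolding case_prod_beta
    by (intro continuous_on_mult continuous_on_compose2[OF assms(1)]
        continuous_on_compose2[OF assms(2)] continuous_intros) auto
  from integral_continuous_on_param[OF this] show ?thesis
    unfolding convT_def[abs_def] by (simp add: cbox_interval)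
qed

lemma convT_has_real_derivative:
  assumes "\<And>z. (K has_real_derivative K' z) (at z)" "continuous_on UNIV K'" "continuous_on UNIV m"
  shows "(convT K m has_real_derivative convT K' m x) (at x)"
proof -
  have cK: "continuous_on UNIV K"
    using assms(1) by (intro continuous_at_imp_continuous_on) (auto intro: DERIV_isCont)
  have c: "continuous_on (UNIV \<times> cbox 0 1) (\<lambda>(x, y). K' (x - y) * m y)"
    unfolding case_prod_beta
    by (intro continuous_on_mult continuous_on_compose2[OF assms(2)]
        continuous_on_compose2[OF assms(3)] continuous_intros) auto
  have d: "((\<lambda>x. K (x - y) * m y) has_field_derivative K' (x - y) * m y) (at x within UNIV)" for x y
  proof -
    have "((\<lambda>x. K (x - y)) has_real_derivative K' (x - y) * 1) (at x)"
      by (rule DERIV_chain2[OF assms(1)]) (auto intro!: derivative_eq_intros)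
    then show ?thesis by (auto intro!: derivative_eq_intros)
  qed
  have "((\<lambda>x. integral (cbox 0 1) (\<lambda>y. K (x - y) * m y)) has_field_derivative
      integral (cbox 0 1) (\<lambda>y. K' (x - y) * m y)) (at x within UNIV)"
    by (rule leibniz_rule_field_derivative[OF d _ c])
       (auto simp: cbox_interval intro: convT_integrand_integrable[OF cK assms(3)])
  then show ?thesis unfolding convT_def[abs_def] by (simp add: cbox_interval)
qed

lemma C2T_convT:
  assumes "C2T K" "continuous_on UNIV m"
  shows "\<And>x. (convT K m has_real_derivative convT (deriv K) m x) (at x)"
    "\<And>x. (convT (deriv K) m has_real_derivative convT (deriv (deriv K)) m x) (at x)"
    "continuous_on UNIV (convT (deriv (deriv K)) m)"
  using C2T_D[OF assms(1)] assms(2)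
  by (auto intro: convT_has_real_derivative continuous_on_convT)

lemma uniform_limit_convT:
  assumes Ks: "uniform_limit UNIV Ks K sequentially" "\<And>n. continuous_on UNIV (Ks n)"
    and K: "continuous_on UNIV K" "\<And>z. \<bar>K z\<bar> \<le> B"
    and ms: "uniform_limit UNIV ms m sequentially" "\<And>n. continuous_on UNIV (ms n)"
      "\<And>n y. 0 \<le> ms n y" "\<And>n. integral {0..1} (ms n) = 1"
    and m: "continuous_on UNIV m"
  shows "uniform_limit UNIV (\<lambda>n. convT (Ks n) (ms n)) (convT K m) sequentially"
proof (rule uniform_limitI)
  fix e :: real assume e: "0 < e"
  have B: "0 \<le> B" using K(2)[of 0] by simp
  have e2: "0 < e / 2" "0 < e / (2 * (B + 1))" using e B by simp_all
  show "\<forall>\<^sub>F n in sequentially. \<forall>x\<in>UNIV. dist (convT (Ks n) (ms n) x) (convT K m x) < e"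
    using uniform_limitD[OF Ks(1) e2(1)] uniform_limitD[OF ms(1) e2(2)]
  proof eventually_elim
    case (elim n)
    show ?case
    proof
      fix x
      have "\<bar>convT (\<lambda>z. Ks n z - K z) (ms n) x\<bar> \<le> e / 2"
        using elim(1) by (intro convT_abs_le_density Ks(2) K(1) continuous_on_diff ms(2-4))
          (auto simp: dist_real_def less_imp_le)
      moreover have "\<bar>convT K (\<lambda>y. ms n y - m y) x\<bar> \<le> B * (e / (2 * (B + 1)))"
        using elim(2) by (intro convT_abs_le_sup K continuous_on_diff ms(2) m)
          (auto simp: dist_real_def less_imp_le)
      moreover have "B * (e / (2 * (B + 1))) < e / 2"
        using B e by (simp add: field_simps)
      moreover have "convT (Ks n) (ms n) x - convT K m x
          = convT (\<lambda>z. Ks n z - K z) (ms n) x + convT K (\<lambda>y. ms n y - m y) x"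
        using convT_diff_left[OF Ks(2) K(1) ms(2)] convT_diff_right[OF K(1) ms(2) m] by simp
      ultimately show "dist (convT (Ks n) (ms n) x) (convT K m x) < e"
        unfolding dist_real_def by linarith
    qed
  qed
qed

section \<open>The effective potential and a priori bounds\<close>

definition eff_potential :: "(real \<Rightarrow> real) \<Rightarrow> (real \<Rightarrow> real) \<Rightarrow> (real \<Rightarrow> real) \<Rightarrow> real \<Rightarrow> real \<Rightarrow> real"
  where "eff_potential K V m H x = convT K m x + H - V x"

lemma solvesP_D:
  assumes "solvesP \<alpha> j V K m H"
  shows "0 < m x" "continuous_on UNIV m" "periodic1 m" "integral {0..1} m = 1"
  using assms unfolding solvesP_def CT_def by auto

lemma eff_potential_eq:
  assumes "solvesP \<alpha> j V K m H"
  shows "eff_potential K V m H x = (j\<^sup>2 / 2) / m x powr \<alpha>"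
  using assms unfolding solvesP_def eff_potential_def by (auto simp: field_simps)

lemma eff_potential_pos:
  assumes "solvesP \<alpha> j V K m H" "j \<noteq> 0"
  shows "0 < eff_potential K V m H x"
proof -
  have "0 < j\<^sup>2" "0 < m x powr \<alpha>" using assms(2) solvesP_D(1)[OF assms(1), of x] by simp_all
  then show ?thesis unfolding eff_potential_eq[OF assms(1)] by simp
qed

lemma density_eq:
  assumes "solvesP \<alpha> j V K m H" "0 < \<alpha>" "j \<noteq> 0"
  shows "m x = ((j\<^sup>2 / 2) / eff_potential K V m H x) powr (1 / \<alpha>)"
proof -
  have "(j\<^sup>2 / 2) / eff_potential K V m H x = m x powr \<alpha>"
    using eff_potential_eq[OF assms(1)] solvesP_D(1)[OF assms(1)] assms(3) by simp
  then show ?thesis using assms(2) solvesP_D(1)[OF assms(1), of x] by (simp add: powr_powr)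
qed

lemma density_bounds_of_potential:
  assumes "solvesP \<alpha> j V K m H" "0 < \<alpha>" "j \<noteq> 0"
    and "0 < lo" "eff_potential K V m H x \<in> {lo..hi}"
  shows "m x \<in> {((j\<^sup>2 / 2) / hi) powr (1 / \<alpha>)..((j\<^sup>2 / 2) / lo) powr (1 / \<alpha>)}"
  unfolding density_eq[OF assms(1-3), of x] using assms(2-5)
  by (auto intro!: powr_mono2 divide_left_mono)

lemma exists_ge_one_of_integral_eq_one:
  fixes m :: "real \<Rightarrow> real"
  assumes "continuous_on UNIV m" "integral {0..1} m = 1"
  obtains x0 where "x0 \<in> {0..1}" "1 \<le> m x0"
proof -
  have "\<exists>x0\<in>{0..1}. 1 \<le> m x0"
  proof (rule ccontr)
    assume none: "\<not> (\<exists>x0\<in>{0..1}. 1 \<le> m x0)"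
    have "m x < 1" if "x \<in> {0<..<1}" for x
    proof -
      have "x \<in> {0..1}" using that by simp
      then show ?thesis using none by (simp add: not_le)
    qed
    then have "integral {0..1} m < integral {0..1::real} (\<lambda>x. 1)"
      by (intro integral_less_real continuous_on_subset[OF assms(1) subset_UNIV] continuous_on_const) auto
    with assms(2) show False by simp
  qed
  then show thesis using that by blast
qed

text \<open>Where the density reaches the value 1 the potential is at most j^2/2; the convolution
  term varies by at most twice its bound.\<close>
lemma eff_potential_le:
  assumes s: "solvesP \<alpha> j V K m H" and "0 < \<alpha>" "j \<noteq> 0"
    and K: "continuous_on UNIV K" "\<And>z. \<bar>K z\<bar> \<le> B" and V: "\<And>x. \<bar>V x\<bar> \<le> BV"
  shows "eff_potential K V m H x \<le> j\<^sup>2 / 2 + 2 * BV + 2 * B"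
proof -
  note m = solvesP_D[OF s]
  obtain x0 where "1 \<le> m x0" using exists_ge_one_of_integral_eq_one[OF m(2,4)] by blast
  then have "1 \<le> m x0 powr \<alpha>" using assms(2) by (intro ge_one_powr_ge_zero) auto
  then have "eff_potential K V m H x0 \<le> j\<^sup>2 / 2"
    unfolding eff_potential_eq[OF s] using assms(3) by (simp add: divide_le_eq)
  moreover have conv: "\<bar>convT K m y\<bar> \<le> B" for y
    using m(1,4) by (intro convT_abs_le_density K m(2) less_imp_le)
  ultimately show ?thesis using V[of x] V[of x0] conv[of x] conv[of x0] unfolding eff_potential_def
    by linarith
qed

lemma le_quadratic_at_critical_point:
  fixes R R1 R2 :: "real \<Rightarrow> real"
  assumes d1: "\<And>x. (R has_real_derivative R1 x) (at x)"
    and d2: "\<And>x. (R1 has_real_derivative R2 x) (at x)"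
    and C: "\<And>x. \<bar>R2 x\<bar> \<le> C" and crit: "R1 x1 = 0"
  shows "R (x1 + t) \<le> R x1 + C * t\<^sup>2"
proof -
  let ?S = "{min x1 (x1 + t)..max x1 (x1 + t)}"
  have S: "convex ?S" "x1 \<in> ?S" "x1 + t \<in> ?S" by auto
  have "\<bar>R1 u\<bar> \<le> C * \<bar>t\<bar>" if "u \<in> ?S" for u
  proof -
    have "\<bar>R1 u - R1 x1\<bar> \<le> C * \<bar>u - x1\<bar>"
      using field_differentiable_bound[OF S(1) _ _ that S(2), of R1 R2 C]
        has_field_derivative_at_within[OF d2] C by simp
    also have "\<dots> \<le> C * \<bar>t\<bar>"
      using that C[of 0] by (intro mult_left_mono) auto
    finally show ?thesis using crit by simp
  qed
  then have "\<bar>R (x1 + t) - R x1\<bar> \<le> C * \<bar>t\<bar> * \<bar>x1 + t - x1\<bar>"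
    using field_differentiable_bound[OF S(1) _ _ S(3,2), of R R1 "C * \<bar>t\<bar>"]
      has_field_derivative_at_within[OF d1] by simp
  then show ?thesis by (simp add: power2_eq_square abs_mult_self_eq)
qed

lemma has_integral_inverse_dist:
  fixes k x1 s d :: real
  assumes "0 < s" "s \<le> d"
  shows "((\<lambda>y. k / \<bar>y - x1\<bar>) has_integral k * (ln d - ln s)) {x1 + s..x1 + d}"
    "((\<lambda>y. k / \<bar>y - x1\<bar>) has_integral k * (ln d - ln s)) {x1 - d..x1 - s}"
proof -
  have "((\<lambda>y. k / \<bar>y - x1\<bar>) has_integral (k * ln ((x1 + d) - x1) - k * ln ((x1 + s) - x1))) {x1 + s..x1 + d}"
  proof (rule fundamental_theorem_of_calculus)
    fix y assume "y \<in> {x1 + s..x1 + d}"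
    then have "0 < y - x1" using assms by auto
    then have "((\<lambda>y. k * ln (y - x1)) has_real_derivative k / \<bar>y - x1\<bar>) (at y)"
      by (auto intro!: derivative_eq_intros simp: field_simps)
    then show "((\<lambda>y. k * ln (y - x1)) has_vector_derivative k / \<bar>y - x1\<bar>) (at y within {x1 + s..x1 + d})"
      by (simp add: has_real_derivative_iff_has_vector_derivative[symmetric] has_field_derivative_at_within)
  qed (use assms in simp)
  then show "((\<lambda>y. k / \<bar>y - x1\<bar>) has_integral k * (ln d - ln s)) {x1 + s..x1 + d}"
    by (simp add: algebra_simps)
  have "((\<lambda>y. k / \<bar>y - x1\<bar>) has_integral (- k * ln (x1 - (x1 - s)) - - k * ln (x1 - (x1 - d)))) {x1 - d..x1 - s}"
  proof (rule fundamental_theorem_of_calculus)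
    fix y assume "y \<in> {x1 - d..x1 - s}"
    then have "0 < x1 - y" using assms by auto
    then have "((\<lambda>y. - k * ln (x1 - y)) has_real_derivative k / \<bar>y - x1\<bar>) (at y)"
      by (auto intro!: derivative_eq_intros simp: field_simps)
    then show "((\<lambda>y. - k * ln (x1 - y)) has_vector_derivative k / \<bar>y - x1\<bar>) (at y within {x1 - d..x1 - s})"
      by (simp add: has_real_derivative_iff_has_vector_derivative[symmetric] has_field_derivative_at_within)
  qed (use assms in simp)
  then show "((\<lambda>y. k / \<bar>y - x1\<bar>) has_integral k * (ln d - ln s)) {x1 - d..x1 - s}"
    by (simp add: algebra_simps)
qed

lemma annulus_in_unit_interval:
  fixes k x1 s d :: real
  assumes "x1 \<in> {0..1}" "0 < s" "s \<le> d" "d \<le> 1 / 2"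
  obtains a b where "{a..b} \<subseteq> {0..1}" "\<And>y. y \<in> {a..b} \<Longrightarrow> s \<le> \<bar>y - x1\<bar> \<and> \<bar>y - x1\<bar> \<le> d"
    "((\<lambda>y. k / \<bar>y - x1\<bar>) has_integral k * (ln d - ln s)) {a..b}"
proof (cases "x1 \<le> 1 / 2")
  case True
  show thesis
    by (rule that[of "x1 + s" "x1 + d"]) (use assms True has_integral_inverse_dist(1) in auto)
next
  case False
  show thesis
    by (rule that[of "x1 - d" "x1 - s"]) (use assms False has_integral_inverse_dist(2) in auto)
qed

lemma inverse_dist_le_powr:
  fixes q C \<alpha> t r :: real
  assumes "0 < \<alpha>" "\<alpha> \<le> 2" "0 < q" "0 < C" "0 < r" "r \<le> 2 * C * t\<^sup>2" "r \<le> q" "t \<noteq> 0"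
  shows "sqrt (q / (2 * C)) / \<bar>t\<bar> \<le> (q / r) powr (1 / \<alpha>)"
proof -
  have ge1: "1 \<le> q / r" using assms by simp
  have "sqrt (q / (2 * C)) / \<bar>t\<bar> = sqrt (q / (2 * C * t\<^sup>2))"
    by (simp add: real_sqrt_divide real_sqrt_mult)
  also have "\<dots> \<le> sqrt (q / r)"
    using assms by (intro real_sqrt_le_mono divide_left_mono) auto
  also have "\<dots> = (q / r) powr (1 / 2)" using ge1 by (simp add: powr_half_sqrt)
  also have "\<dots> \<le> (q / r) powr (1 / \<alpha>)"
    using assms ge1 by (intro powr_mono) (auto simp: field_simps)
  finally show ?thesis .
qed

text \<open>Were the minimum e of the potential below this floor, then near the minimiser the density
  would dominate k / dist on the distances between s = sqrt (e / C) and d, and the logarithmic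
  integral of that bound would exceed the total mass 1.\<close>
definition potential_floor :: "real \<Rightarrow> real \<Rightarrow> real" where
  "potential_floor q C =
     (let k = sqrt (q / (2 * C)); d = min (1 / 2) k in min (q / 2) (C * (d * exp (- 1 / k))\<^sup>2))"

lemma potential_floor_pos:
  assumes "0 < q" "0 < C"
  shows "0 < potential_floor q C"
proof -
  have "0 < min (1 / 2) (sqrt (q / (2 * C)))" using assms by simp
  then have "0 < min (1 / 2) (sqrt (q / (2 * C))) * exp (- 1 / sqrt (q / (2 * C)))" by simp
  then have "0 < (min (1 / 2) (sqrt (q / (2 * C))) * exp (- 1 / sqrt (q / (2 * C))))\<^sup>2"
    by (rule zero_less_power)
  then show ?thesis unfolding potential_floor_def Let_def using assms by simp
qed

lemma density_ge_inverse_dist: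
  fixes R m :: "real \<Rightarrow> real"
  assumes a: "0 < \<alpha>" "\<alpha> \<le> 2" and q: "0 < q" and C: "0 < C"
    and pos: "\<And>x. 0 < R x" and quad: "\<And>t. R (z + t) \<le> C * s\<^sup>2 + C * t\<^sup>2"
    and small: "C * s\<^sup>2 < q / 2" "C * d\<^sup>2 \<le> q / 2"
    and mR: "\<And>x. m x = (q / R x) powr (1 / \<alpha>)"
    and y: "0 < s" "s \<le> \<bar>y - z\<bar>" "\<bar>y - z\<bar> \<le> d"
  shows "sqrt (q / (2 * C)) / \<bar>y - z\<bar> \<le> m y"
proof -
  have "s\<^sup>2 \<le> (y - z)\<^sup>2" "(y - z)\<^sup>2 \<le> d\<^sup>2"
    using y by (metis abs_le_square_iff abs_of_pos less_le_trans)+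
  then have "C * s\<^sup>2 \<le> C * (y - z)\<^sup>2" "C * (y - z)\<^sup>2 \<le> C * d\<^sup>2"
    using C by simp_all
  then have "R y \<le> 2 * C * (y - z)\<^sup>2" "R y \<le> q"
    using quad[of "y - z"] small by simp_all
  then show ?thesis
    unfolding mR using inverse_dist_le_powr[OF a q C pos] y by simp
qed

lemma potential_floor_le_min:
  fixes R m :: "real \<Rightarrow> real"
  assumes a: "0 < \<alpha>" "\<alpha> \<le> 2" and q: "0 < q" and C: "0 < C"
    and x1: "x1 \<in> {0..1}" and pos: "\<And>x. 0 < R x" and quad: "\<And>t. R (x1 + t) \<le> R x1 + C * t\<^sup>2"
    and mR: "\<And>x. m x = (q / R x) powr (1 / \<alpha>)"
    and m: "continuous_on UNIV m" "integral {0..1} m = 1"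
  shows "potential_floor q C \<le> R x1"
proof (rule ccontr)
  define k where "k = sqrt (q / (2 * C))"
  define d where "d = min (1 / 2) k"
  define s where "s = sqrt (R x1 / C)"
  have k: "0 < k" "k\<^sup>2 = q / (2 * C)" using q C unfolding k_def by simp_all
  have d: "0 < d" "d \<le> 1 / 2" "C * d\<^sup>2 \<le> q / 2"
  proof -
    show "0 < d" "d \<le> 1 / 2" using k unfolding d_def by auto
    have "d\<^sup>2 \<le> k\<^sup>2" using k unfolding d_def by (intro power_mono) auto
    then show "C * d\<^sup>2 \<le> q / 2" using k(2) C by (simp add: field_simps)
  qed
  have s: "0 < s" "R x1 = C * s\<^sup>2" unfolding s_def using pos[of x1] C by simp_all
  assume "\<not> potential_floor q C \<le> R x1"
  then have small: "C * s\<^sup>2 < q / 2" "C * s\<^sup>2 < C * (d * exp (- 1 / k))\<^sup>2"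
    unfolding potential_floor_def Let_def k_def[symmetric] d_def[symmetric] s(2) by auto
  then have s_lt: "s < d * exp (- 1 / k)"
    using C d(1) by (simp add: power_less_imp_less_base)
  moreover have "d * exp (- 1 / k) \<le> d" using d(1) k(1) by simp
  ultimately have sd: "s \<le> d" by simp
  obtain a b where ab: "{a..b} \<subseteq> {0..1}" "\<And>y. y \<in> {a..b} \<Longrightarrow> s \<le> \<bar>y - x1\<bar> \<and> \<bar>y - x1\<bar> \<le> d"
    "((\<lambda>y. k / \<bar>y - x1\<bar>) has_integral k * (ln d - ln s)) {a..b}"
    using annulus_in_unit_interval[OF x1 s(1) sd d(2)] by blast
  have "R (x1 + t) \<le> C * s\<^sup>2 + C * t\<^sup>2" for t using quad[of t] s(2) by simp
  note near = density_ge_inverse_dist[where z = x1, OF a q C pos this small(1) d(3) mR s(1)]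
  have "k * (ln d - ln s) \<le> integral {a..b} m"
    using ab(2) near unfolding k_def
    by (intro has_integral_le[OF ab(3)[unfolded k_def] integrable_integral]
        integrable_continuous_interval continuous_on_subset[OF m(1) subset_UNIV]) auto
  also have "\<dots> \<le> integral {0..1} m"
    using ab(1) mR by (intro integral_subset_le integrable_continuous_interval
        continuous_on_subset[OF m(1) subset_UNIV]) auto
  finally have "k * (ln d - ln s) \<le> 1" using m(2) by simp
  moreover have "ln s < ln (d * exp (- 1 / k))"
    using s_lt s(1) by (subst ln_less_cancel_iff) auto
  moreover have "ln (d * exp (- 1 / k)) = ln d - 1 / k"
    using d(1) by (simp add: ln_mult)
  ultimately have "k * ln s < k * (ln d - 1 / k)" using k(1) by simp
  also have "\<dots> = k * ln d - 1" using k(1) by (simp add: right_diff_distrib)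
  finally show False using \<open>k * (ln d - ln s) \<le> 1\<close> by (simp add: right_diff_distrib)
qed

lemma potential_floor_le:
  fixes R R1 R2 m :: "real \<Rightarrow> real"
  assumes a: "0 < \<alpha>" "\<alpha> \<le> 2" and q: "0 < q" and C: "0 < C"
    and d1: "\<And>x. (R has_real_derivative R1 x) (at x)"
    and d2: "\<And>x. (R1 has_real_derivative R2 x) (at x)" and R2: "\<And>x. \<bar>R2 x\<bar> \<le> C"
    and pos: "\<And>x. 0 < R x" and per: "periodic1 R"
    and mR: "\<And>x. m x = (q / R x) powr (1 / \<alpha>)"
    and m: "continuous_on UNIV m" "integral {0..1} m = 1"
  shows "potential_floor q C \<le> R x"
proof -
  have "continuous_on UNIV R"
    using d1 by (intro continuous_at_imp_continuous_on) (auto intro: DERIV_isCont)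
  then obtain x1 where x1: "x1 \<in> {0..1}" "\<And>x. R x1 \<le> R x"
    using periodic1_attains_min[OF per] by blast
  have "R1 x1 = 0" by (rule DERIV_local_min[OF d1[of x1], of 1]) (use x1 in auto)
  then have "R (x1 + t) \<le> R x1 + C * t\<^sup>2" for t
    by (rule le_quadratic_at_critical_point[OF d1 d2 R2])
  from potential_floor_le_min[OF a q C x1(1) pos this mR m] x1(2)[of x] show ?thesis by simp
qed

section \<open>Regularity of solutions\<close>

lemma C2T_mult_powr:
  fixes R R1 R2 m :: "real \<Rightarrow> real"
  assumes d1: "\<And>x. (R has_real_derivative R1 x) (at x)"
    and d2: "\<And>x. (R1 has_real_derivative R2 x) (at x)"
    and c2: "continuous_on UNIV R2" and pos: "\<And>x. 0 < R x"
    and mR: "\<And>x. m x = c * R x powr \<gamma>" and per: "periodic1 m"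
  shows "C2T m" "deriv m = (\<lambda>x. c * (\<gamma> * R x powr (\<gamma> - 1) * R1 x))"
    "deriv (deriv m) = (\<lambda>x. c * (\<gamma> * ((\<gamma> - 1) * R x powr (\<gamma> - 2) * R1 x * R1 x
        + R x powr (\<gamma> - 1) * R2 x)))"
proof -
  have meq: "m = (\<lambda>x. c * R x powr \<gamma>)" using mR by (intro ext) simp
  have D1: "(m has_real_derivative c * (\<gamma> * R x powr (\<gamma> - 1) * R1 x)) (at x)" for x
    unfolding meq by (intro DERIV_cmult DERIV_chain2[OF has_real_derivative_powr[OF pos] d1])
  show e1: "deriv m = (\<lambda>x. c * (\<gamma> * R x powr (\<gamma> - 1) * R1 x))"
    using D1 DERIV_imp_deriv by blast
  have D2: "((\<lambda>x. c * (\<gamma> * R x powr (\<gamma> - 1) * R1 x)) has_real_derivative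
      c * (\<gamma> * ((\<gamma> - 1) * R x powr (\<gamma> - 2) * R1 x * R1 x + R x powr (\<gamma> - 1) * R2 x))) (at x)" for x
  proof -
    have "((\<lambda>x. R x powr (\<gamma> - 1)) has_real_derivative ((\<gamma> - 1) * R x powr (\<gamma> - 1 - 1)) * R1 x) (at x)"
      by (rule DERIV_chain2[OF has_real_derivative_powr[OF pos] d1])
    from DERIV_cmult[OF DERIV_cmult[OF DERIV_mult[OF this d2]], of \<gamma> c]
    show ?thesis by (simp add: algebra_simps)
  qed
  show e2: "deriv (deriv m) = (\<lambda>x. c * (\<gamma> * ((\<gamma> - 1) * R x powr (\<gamma> - 2) * R1 x * R1 x
      + R x powr (\<gamma> - 1) * R2 x)))"
    unfolding e1 using D2 DERIV_imp_deriv by blast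
  have "continuous_on UNIV R" "continuous_on UNIV R1"
    using d1 d2 by (auto intro!: continuous_at_imp_continuous_on DERIV_isCont)
  moreover have "\<forall>x\<in>UNIV. R x \<noteq> 0" using pos by (metis less_irrefl)
  ultimately have "continuous_on UNIV (\<lambda>x. c * (\<gamma> * ((\<gamma> - 1) * R x powr (\<gamma> - 2) * R1 x * R1 x
      + R x powr (\<gamma> - 1) * R2 x)))"
    by (intro continuous_intros c2)
  moreover have "deriv (\<lambda>x. c * (\<gamma> * R x powr (\<gamma> - 1) * R1 x)) = (\<lambda>x. c * (\<gamma> * ((\<gamma> - 1)
      * R x powr (\<gamma> - 2) * R1 x * R1 x + R x powr (\<gamma> - 1) * R2 x)))"
    using e2 unfolding e1 .
  ultimately show "C2T m" unfolding C2T_def e1 using per D1 D2 by simp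
qed

lemma eff_potential_derivs:
  assumes "C2T K" "C2T V" "continuous_on UNIV m"
  shows "(eff_potential K V m H has_real_derivative convT (deriv K) m x - deriv V x) (at x)"
    "((\<lambda>x. convT (deriv K) m x - deriv V x) has_real_derivative
       convT (deriv (deriv K)) m x - deriv (deriv V) x) (at x)"
    "continuous_on UNIV (\<lambda>x. convT (deriv (deriv K)) m x - deriv (deriv V) x)"
  using C2T_convT[OF assms(1,3)] C2T_D[OF assms(2)] unfolding eff_potential_def[abs_def]
  by (auto intro!: derivative_eq_intros continuous_on_diff)

lemma density_eq_powr:
  assumes "solvesP \<alpha> j V K m H" "0 < \<alpha>" "j \<noteq> 0"
  shows "m x = (j\<^sup>2 / 2) powr (1 / \<alpha>) * eff_potential K V m H x powr (- 1 / \<alpha>)"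
proof -
  have "m x = (j\<^sup>2 / 2) powr (1 / \<alpha>) / eff_potential K V m H x powr (1 / \<alpha>)"
    unfolding density_eq[OF assms, of x]
    by (rule powr_divide)
  also have "\<dots> = (j\<^sup>2 / 2) powr (1 / \<alpha>) * eff_potential K V m H x powr (- (1 / \<alpha>))"
    by (simp add: powr_minus_divide)
  finally show ?thesis by simp
qed

lemma solution_C2T:
  assumes "C2T K" "C2T V" "solvesP \<alpha> j V K m H" "0 < \<alpha>" "j \<noteq> 0"
  shows "C2T m"
    and "deriv m = (\<lambda>x. (j\<^sup>2 / 2) powr (1 / \<alpha>) * (- 1 / \<alpha> * eff_potential K V m H x powr (- 1 / \<alpha> - 1)
      * (convT (deriv K) m x - deriv V x)))"
    and "deriv (deriv m) = (\<lambda>x. (j\<^sup>2 / 2) powr (1 / \<alpha>) * (- 1 / \<alpha> * ((- 1 / \<alpha> - 1)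
      * eff_potential K V m H x powr (- 1 / \<alpha> - 2) * (convT (deriv K) m x - deriv V x)
      * (convT (deriv K) m x - deriv V x) + eff_potential K V m H x powr (- 1 / \<alpha> - 1)
      * (convT (deriv (deriv K)) m x - deriv (deriv V) x))))"
  using C2T_mult_powr[OF eff_potential_derivs[OF assms(1,2) solvesP_D(2)[OF assms(3)]]
      eff_potential_pos[OF assms(3,5)] density_eq_powr[OF assms(3-5)] solvesP_D(3)[OF assms(3)]]
  by simp_all

section \<open>Stability\<close>

lemma powr_neg_strongly_monotone:
  fixes \<alpha> b x y :: real
  assumes "0 < \<alpha>" "0 < x" "x \<le> b" "0 < y" "y \<le> b"
  shows "\<alpha> * b powr (- \<alpha> - 1) * (x - y)\<^sup>2 \<le> (y powr (- \<alpha>) - x powr (- \<alpha>)) * (x - y)"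
proof -
  have ordered: "\<alpha> * b powr (- \<alpha> - 1) * (u - v)\<^sup>2 \<le> (v powr (- \<alpha>) - u powr (- \<alpha>)) * (u - v)"
    if "0 < v" "v < u" "u \<le> b" for u v
  proof -
    have deriv: "((\<lambda>t. t powr (- \<alpha>)) has_real_derivative - \<alpha> * t powr (- \<alpha> - 1)) (at t)"
      if "v \<le> t" "t \<le> u" for t
      using that \<open>0 < v\<close> by (intro has_real_derivative_powr) simp
    obtain z where z: "v < z" "z < u"
      "u powr (- \<alpha>) - v powr (- \<alpha>) = (u - v) * (- \<alpha> * z powr (- \<alpha> - 1))"
      using MVT2[OF \<open>v < u\<close> deriv] by blast
    have "b powr (- \<alpha> - 1) \<le> z powr (- \<alpha> - 1)"
      using z that assms(1) by (intro powr_mono2') auto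
    then have "\<alpha> * b powr (- \<alpha> - 1) * (u - v)\<^sup>2 \<le> \<alpha> * z powr (- \<alpha> - 1) * (u - v)\<^sup>2"
      using assms(1) by (intro mult_right_mono) auto
    also have "\<dots> = (\<alpha> * z powr (- \<alpha> - 1) * (u - v)) * (u - v)"
      by (simp add: power2_eq_square)
    also have "\<alpha> * z powr (- \<alpha> - 1) * (u - v) = v powr (- \<alpha>) - u powr (- \<alpha>)"
      using z(3) by (simp add: algebra_simps)
    finally show ?thesis .
  qed
  show ?thesis
  proof (cases x y rule: linorder_cases)
    case less
    then show ?thesis using ordered[of x y] assms by (simp add: power2_commute algebra_simps)
  qed (use ordered assms in auto)
qed

lemma condM_convT_nonneg:
  assumes "condM G" "continuous_on UNIV G" "CT F"
  shows "0 \<le> integral {0..1} (\<lambda>x. F x * convT G F x)"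
proof -
  have "F x * convT G F x = integral {0..1} (\<lambda>y. G (x - y) * F x * F y)" for x
    using integral_mult_right[of "{0..1}" "F x" "\<lambda>y. G (x - y) * F y"]
    unfolding convT_def by (simp add: mult_ac)
  then show ?thesis using assms(1,3) unfolding condM_def by simp
qed

lemma stability_pointwise:
  fixes G K1 K2 m1 m2 V :: "real \<Rightarrow> real"
  assumes a: "0 < \<alpha>" and G: "continuous_on UNIV G"
    and K: "continuous_on UNIV K1" "continuous_on UNIV K2"
    and s1: "solvesP \<alpha> j V K1 m1 H1" and s2: "solvesP \<alpha> j V K2 m2 H2"
    and e1: "\<And>z. \<bar>K1 z - G z\<bar> \<le> \<epsilon>1" and e2: "\<And>z. \<bar>K2 z - G z\<bar> \<le> \<epsilon>2"
    and b: "\<And>x. m1 x \<le> b" "\<And>x. m2 x \<le> b"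
  shows "(j\<^sup>2 / 2) * \<alpha> * b powr (- \<alpha> - 1) * (m1 x - m2 x)\<^sup>2
      \<le> - ((m1 x - m2 x) * convT G (\<lambda>y. m1 y - m2 y) x) + (\<epsilon>1 + \<epsilon>2) * \<bar>m1 x - m2 x\<bar>
        - (H1 - H2) * (m1 x - m2 x)"
proof -
  note n1 = solvesP_D[OF s1] and n2 = solvesP_D[OF s2]
  define D where "D = convT (\<lambda>z. K1 z - G z) m1 x - convT (\<lambda>z. K2 z - G z) m2 x"
  have "\<bar>D\<bar> \<le> \<epsilon>1 + \<epsilon>2"
    using convT_abs_le_density[OF continuous_on_diff[OF K(1) G] n1(2) e1 less_imp_le[OF n1(1)] n1(4), of x]
      convT_abs_le_density[OF continuous_on_diff[OF K(2) G] n2(2) e2 less_imp_le[OF n2(1)] n2(4), of x]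
      abs_triangle_ineq4[of "convT (\<lambda>z. K1 z - G z) m1 x" "convT (\<lambda>z. K2 z - G z) m2 x"]
    unfolding D_def by linarith
  then have "\<bar>D\<bar> * \<bar>m1 x - m2 x\<bar> \<le> (\<epsilon>1 + \<epsilon>2) * \<bar>m1 x - m2 x\<bar>"
    by (intro mult_right_mono) auto
  moreover have "- D * (m1 x - m2 x) \<le> \<bar>D\<bar> * \<bar>m1 x - m2 x\<bar>"
    by (metis abs_ge_minus_self abs_mult mult_minus_left)
  moreover have eq: "eff_potential K2 V m2 H2 x - eff_potential K1 V m1 H1 x
      = - convT G (\<lambda>y. m1 y - m2 y) x - D - (H1 - H2)"
    unfolding eff_potential_def D_def
    using convT_diff_right[OF G n1(2) n2(2), of x] convT_diff_left[OF K(1) G n1(2), of x]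
      convT_diff_left[OF K(2) G n2(2), of x] by simp
  have "(eff_potential K2 V m2 H2 x - eff_potential K1 V m1 H1 x) * (m1 x - m2 x)
      = - ((m1 x - m2 x) * convT G (\<lambda>y. m1 y - m2 y) x) + (- D * (m1 x - m2 x))
        - (H1 - H2) * (m1 x - m2 x)"
    unfolding eq by (simp add: algebra_simps)
  moreover have "(j\<^sup>2 / 2) * \<alpha> * b powr (- \<alpha> - 1) * (m1 x - m2 x)\<^sup>2
      \<le> (eff_potential K2 V m2 H2 x - eff_potential K1 V m1 H1 x) * (m1 x - m2 x)"
    using mult_left_mono[OF powr_neg_strongly_monotone[OF a n1(1) b(1) n2(1) b(2)], of "j\<^sup>2 / 2"]
    unfolding eff_potential_eq[OF s1] eff_potential_eq[OF s2]
    by (simp add: powr_minus_divide algebra_simps)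
  ultimately show ?thesis by linarith
qed

text \<open>Testing the difference of the two equations against m1 - m2, condition (M) removes the
  interaction term and the normalisations remove the constants, leaving the strong monotonicity
  of m \<mapsto> m powr -\<alpha> against the kernel errors.\<close>
lemma L2_stability:
  fixes G K1 K2 m1 m2 V :: "real \<Rightarrow> real"
  assumes a: "0 < \<alpha>" and G: "continuous_on UNIV G" "condM G"
    and K: "continuous_on UNIV K1" "continuous_on UNIV K2"
    and s1: "solvesP \<alpha> j V K1 m1 H1" and s2: "solvesP \<alpha> j V K2 m2 H2"
    and e1: "\<And>z. \<bar>K1 z - G z\<bar> \<le> \<epsilon>1" and e2: "\<And>z. \<bar>K2 z - G z\<bar> \<le> \<epsilon>2"
    and b: "\<And>x. m1 x \<le> b" "\<And>x. m2 x \<le> b"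
  shows "(j\<^sup>2 / 2) * \<alpha> * b powr (- \<alpha> - 1) * integral {0..1} (\<lambda>x. (m1 x - m2 x)\<^sup>2)
      \<le> (\<epsilon>1 + \<epsilon>2) * integral {0..1} (\<lambda>x. \<bar>m1 x - m2 x\<bar>)"
proof -
  note n1 = solvesP_D[OF s1] and n2 = solvesP_D[OF s2]
  define c where "c = (j\<^sup>2 / 2) * \<alpha> * b powr (- \<alpha> - 1)"
  define F where "F = (\<lambda>x. m1 x - m2 x)"
  have cF: "continuous_on UNIV F" unfolding F_def by (intro continuous_on_diff n1(2) n2(2))
  have cC: "continuous_on UNIV (convT G F)" by (rule continuous_on_convT[OF G(1) cF])
  have int: "f integrable_on {0..1}" if "continuous_on UNIV f" for f :: "real \<Rightarrow> real"
    using that by (rule integrable_unit_of_continuous)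
  have iP: "(\<lambda>x. F x * convT G F x) integrable_on {0..1}" by (intro int continuous_on_mult cF cC)
  have iA: "(\<lambda>x. \<bar>F x\<bar>) integrable_on {0..1}" by (intro int continuous_on_rabs cF)
  have iF: "F integrable_on {0..1}" by (rule int[OF cF])
  have "integral {0..1} (\<lambda>x. c * (F x)\<^sup>2)
      \<le> integral {0..1} (\<lambda>x. - (F x * convT G F x) + (\<epsilon>1 + \<epsilon>2) * \<bar>F x\<bar> - (H1 - H2) * F x)"
    unfolding c_def F_def
    by (intro Henstock_Kurzweil_Integration.integral_le int continuous_intros cF[unfolded F_def]
        cC[unfolded F_def] stability_pointwise[OF a G(1) K s1 s2 e1 e2 b])
  also have "\<dots> = - integral {0..1} (\<lambda>x. F x * convT G F x)
      + (\<epsilon>1 + \<epsilon>2) * integral {0..1} (\<lambda>x. \<bar>F x\<bar>) - (H1 - H2) * integral {0..1} F"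
    by (intro integral_unique has_integral_diff has_integral_add has_integral_neg
        has_integral_mult_right integrable_integral iP iA iF)
  also have "integral {0..1} F = 0"
    unfolding F_def using integral_diff[OF int[OF n1(2)] int[OF n2(2)]] n1(4) n2(4) by simp
  finally have bound: "integral {0..1} (\<lambda>x. c * (F x)\<^sup>2) \<le> - integral {0..1} (\<lambda>x. F x * convT G F x)
      + (\<epsilon>1 + \<epsilon>2) * integral {0..1} (\<lambda>x. \<bar>F x\<bar>) - (H1 - H2) * 0" .
  have "CT F" using cF n1(3) n2(3) unfolding CT_def periodic1_def F_def by simp
  with bound condM_convT_nonneg[OF G(2,1), of F]
  have "integral {0..1} (\<lambda>x. c * (F x)\<^sup>2) \<le> (\<epsilon>1 + \<epsilon>2) * integral {0..1} (\<lambda>x. \<bar>F x\<bar>)"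
    by linarith
  then show ?thesis unfolding c_def F_def by (simp add: mult.assoc)
qed

lemma L1_sq_le_L2:
  fixes f :: "real \<Rightarrow> real"
  assumes "continuous_on UNIV f"
  shows "(integral {0..1} (\<lambda>x. \<bar>f x\<bar>))\<^sup>2 \<le> integral {0..1} (\<lambda>x. (f x)\<^sup>2)"
proof -
  define d where "d = integral {0..1} (\<lambda>x. \<bar>f x\<bar>)"
  have i1: "((\<lambda>x. \<bar>f x\<bar>) has_integral d) {0..1}"
    unfolding d_def by (intro integrable_integral integrable_unit_of_continuous continuous_on_rabs assms)
  have i2: "((\<lambda>x. (f x)\<^sup>2) has_integral integral {0..1} (\<lambda>x. (f x)\<^sup>2)) {0..1}"
    by (intro integrable_integral integrable_unit_of_continuous continuous_intros assms)
  have "((\<lambda>x. (\<bar>f x\<bar> - d)\<^sup>2) has_integral integral {0..1} (\<lambda>x. (f x)\<^sup>2) - 2 * d * d + d\<^sup>2) {0..1}"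
    using has_integral_add[OF has_integral_diff[OF i2 has_integral_mult_right[OF i1, of "2 * d"]]
        has_integral_const_real[of "d\<^sup>2" 0 1]]
    by (simp add: power2_eq_square algebra_simps)
  moreover have "0 \<le> integral {0..1} (\<lambda>x. (\<bar>f x\<bar> - d)\<^sup>2)"
    by (intro integral_nonneg integrable_unit_of_continuous continuous_intros assms) simp
  ultimately show ?thesis unfolding d_def[symmetric] by (simp add: integral_unique power2_eq_square)
qed

lemma L1_stability:
  fixes G K1 K2 m1 m2 V :: "real \<Rightarrow> real"
  assumes a: "0 < \<alpha>" and j: "j \<noteq> 0"
    and G: "continuous_on UNIV G" "condM G"
    and K: "continuous_on UNIV K1" "continuous_on UNIV K2"
    and s1: "solvesP \<alpha> j V K1 m1 H1" and s2: "solvesP \<alpha> j V K2 m2 H2"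
    and e1: "\<And>z. \<bar>K1 z - G z\<bar> \<le> \<epsilon>1" and e2: "\<And>z. \<bar>K2 z - G z\<bar> \<le> \<epsilon>2"
    and b: "\<And>x. m1 x \<le> b" "\<And>x. m2 x \<le> b"
  shows "integral {0..1} (\<lambda>x. \<bar>m1 x - m2 x\<bar>) \<le> (\<epsilon>1 + \<epsilon>2) / ((j\<^sup>2 / 2) * \<alpha> * b powr (- \<alpha> - 1))"
proof -
  define c where "c = (j\<^sup>2 / 2) * \<alpha> * b powr (- \<alpha> - 1)"
  define d where "d = integral {0..1} (\<lambda>x. \<bar>m1 x - m2 x\<bar>)"
  have "0 < b" using b(1)[of 0] solvesP_D(1)[OF s1, of 0] by linarith
  then have c: "0 < c" unfolding c_def using a j by simp
  have cm: "continuous_on UNIV (\<lambda>x. m1 x - m2 x)"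
    by (intro continuous_on_diff solvesP_D(2)[OF s1] solvesP_D(2)[OF s2])
  have "c * d\<^sup>2 \<le> (\<epsilon>1 + \<epsilon>2) * d"
    using L2_stability[OF a G K s1 s2 e1 e2 b] mult_left_mono[OF L1_sq_le_L2[OF cm] less_imp_le[OF c]]
    unfolding c_def d_def by linarith
  then have "(c * d) * d \<le> (\<epsilon>1 + \<epsilon>2) * d" by (simp add: power2_eq_square mult.assoc)
  moreover have "0 \<le> d"
    unfolding d_def by (intro integral_nonneg integrable_unit_of_continuous continuous_on_rabs cm) simp
  moreover have "0 \<le> \<epsilon>1 + \<epsilon>2" using e1[of 0] e2[of 0] by linarith
  ultimately have "c * d \<le> \<epsilon>1 + \<epsilon>2"
    using c by (cases "d = 0") (simp_all add: mult_le_cancel_right)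
  then show ?thesis unfolding c_def[symmetric] d_def[symmetric] using c by (simp add: pos_le_divide_eq mult.commute)
qed

text \<open>A larger constant forces a smaller density everywhere, which is incompatible with both
  densities having mass 1.\<close>
lemma H_diff_le:
  assumes a: "0 < \<alpha>" and j: "j \<noteq> 0"
    and s1: "solvesP \<alpha> j V K1 m1 H1" and s2: "solvesP \<alpha> j V K2 m2 H2"
    and conv: "\<And>x. convT K2 m2 x - convT K1 m1 x \<le> \<delta>"
  shows "H1 - H2 \<le> \<delta>"
proof (rule ccontr)
  assume "\<not> H1 - H2 \<le> \<delta>"
  then have "eff_potential K2 V m2 H2 x < eff_potential K1 V m1 H1 x" for x
    using conv[of x] unfolding eff_potential_def by linarith
  then have "(j\<^sup>2 / 2) / eff_potential K1 V m1 H1 x < (j\<^sup>2 / 2) / eff_potential K2 V m2 H2 x" for x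
    using eff_potential_pos[OF s1 j, of x] eff_potential_pos[OF s2 j, of x] j
    by (intro divide_strict_left_mono) auto
  then have "m1 x < m2 x" for x
    unfolding density_eq[OF s1 a j, of x] density_eq[OF s2 a j, of x]
    using eff_potential_pos[OF s1 j, of x] a j by (intro powr_less_mono2) auto
  then have "integral {0..1} m1 < integral {0..1} m2"
    by (intro integral_less_real continuous_on_subset[OF solvesP_D(2)[OF s1] subset_UNIV]
        continuous_on_subset[OF solvesP_D(2)[OF s2] subset_UNIV]) auto
  then show False using solvesP_D(4)[OF s1] solvesP_D(4)[OF s2] by simp
qed

lemma H_stability:
  assumes "0 < \<alpha>" "j \<noteq> 0" "solvesP \<alpha> j V K1 m1 H1" "solvesP \<alpha> j V K2 m2 H2"
    and "\<And>x. \<bar>convT K1 m1 x - convT K2 m2 x\<bar> \<le> \<delta>"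
  shows "\<bar>H1 - H2\<bar> \<le> \<delta>"
  using H_diff_le[OF assms(1-4), of \<delta>] H_diff_le[OF assms(1,2,4,3), of \<delta>] assms(5)
  by (simp add: abs_le_iff abs_minus_commute)

lemma powr_le_powr_sum:
  fixes t lo hi p :: real
  assumes "0 < lo" "lo \<le> t" "t \<le> hi"
  shows "t powr p \<le> lo powr p + hi powr p"
proof (cases "0 \<le> p")
  case True
  then have "t powr p \<le> hi powr p" using assms by (intro powr_mono2) auto
  then show ?thesis by (simp add: add_increasing)
next
  case False
  then have "t powr p \<le> lo powr p" using assms by (intro powr_mono2') auto
  then show ?thesis by (simp add: add_increasing2)
qed

lemma powr_lipschitz_on:
  fixes lo hi p :: real
  assumes "0 < lo"
  shows "(\<bar>p\<bar> * (lo powr (p - 1) + hi powr (p - 1)))-lipschitz_on {lo..hi} (\<lambda>t. t powr p)"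
proof (rule lipschitz_onI)
  fix s t assume st: "s \<in> {lo..hi}" "t \<in> {lo..hi}"
  have deriv: "((\<lambda>t. t powr p) has_field_derivative p * u powr (p - 1)) (at u within {lo..hi})"
    if "u \<in> {lo..hi}" for u
    using that assms by (intro has_field_derivative_at_within[OF has_real_derivative_powr]) simp
  have bound: "norm (p * u powr (p - 1)) \<le> \<bar>p\<bar> * (lo powr (p - 1) + hi powr (p - 1))"
    if "u \<in> {lo..hi}" for u
  proof -
    have "u powr (p - 1) \<le> lo powr (p - 1) + hi powr (p - 1)"
      using that assms by (intro powr_le_powr_sum) auto
    then have "\<bar>p\<bar> * u powr (p - 1) \<le> \<bar>p\<bar> * (lo powr (p - 1) + hi powr (p - 1))"
      by (rule mult_left_mono) simp
    then show ?thesis by (simp add: abs_mult)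
  qed
  show "dist (s powr p) (t powr p) \<le> \<bar>p\<bar> * (lo powr (p - 1) + hi powr (p - 1)) * dist s t"
    using field_differentiable_bound[OF convex_real_interval(5) deriv bound st] by (simp add: dist_real_def)
qed (intro mult_nonneg_nonneg add_nonneg_nonneg abs_ge_zero powr_ge_zero)

lemma density_stability:
  assumes s1: "solvesP \<alpha> j V K1 m1 H1" and s2: "solvesP \<alpha> j V K2 m2 H2"
    and a: "0 < \<alpha>" and j: "j \<noteq> 0" and lo: "0 < lo"
    and R: "eff_potential K1 V m1 H1 x \<in> {lo..hi}" "eff_potential K2 V m2 H2 x \<in> {lo..hi}"
  shows "\<bar>m1 x - m2 x\<bar> \<le> (j\<^sup>2 / 2) powr (1 / \<alpha>) * ((1 / \<alpha>) * (lo powr (- 1 / \<alpha> - 1) + hi powr (- 1 / \<alpha> - 1)))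
      * \<bar>eff_potential K1 V m1 H1 x - eff_potential K2 V m2 H2 x\<bar>"
proof -
  have "\<bar>eff_potential K1 V m1 H1 x powr (- 1 / \<alpha>) - eff_potential K2 V m2 H2 x powr (- 1 / \<alpha>)\<bar>
      \<le> \<bar>- 1 / \<alpha>\<bar> * (lo powr (- 1 / \<alpha> - 1) + hi powr (- 1 / \<alpha> - 1))
        * \<bar>eff_potential K1 V m1 H1 x - eff_potential K2 V m2 H2 x\<bar>"
    using lipschitz_onD[OF powr_lipschitz_on[where p = "- 1 / \<alpha>" and hi = hi, OF lo] R]
    by (simp only: dist_real_def)
  moreover have "\<bar>- 1 / \<alpha>\<bar> = 1 / \<alpha>" using a by simp
  ultimately have "\<bar>eff_potential K1 V m1 H1 x powr (- 1 / \<alpha>) - eff_potential K2 V m2 H2 x powr (- 1 / \<alpha>)\<bar>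
      \<le> (1 / \<alpha>) * (lo powr (- 1 / \<alpha> - 1) + hi powr (- 1 / \<alpha> - 1))
        * \<bar>eff_potential K1 V m1 H1 x - eff_potential K2 V m2 H2 x\<bar>" by simp
  note bound = this
  have "\<bar>m1 x - m2 x\<bar> = (j\<^sup>2 / 2) powr (1 / \<alpha>)
      * \<bar>eff_potential K1 V m1 H1 x powr (- 1 / \<alpha>) - eff_potential K2 V m2 H2 x powr (- 1 / \<alpha>)\<bar>"
    using density_eq_powr[OF s1 a j, of x] density_eq_powr[OF s2 a j, of x]
    by (simp add: abs_mult right_diff_distrib[symmetric])
  also have "\<dots> \<le> (j\<^sup>2 / 2) powr (1 / \<alpha>) * ((1 / \<alpha>) * (lo powr (- 1 / \<alpha> - 1) + hi powr (- 1 / \<alpha> - 1))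
        * \<bar>eff_potential K1 V m1 H1 x - eff_potential K2 V m2 H2 x\<bar>)"
    by (rule mult_left_mono[OF bound]) simp
  finally show ?thesis by (simp only: mult.assoc)
qed

lemma convT_dist_le:
  assumes G: "continuous_on UNIV Gk" "\<And>z. \<bar>Gk z\<bar> \<le> S"
    and A: "continuous_on UNIV A1" "continuous_on UNIV A2"
      "\<And>z. \<bar>A1 z - Gk z\<bar> \<le> \<epsilon>1" "\<And>z. \<bar>A2 z - Gk z\<bar> \<le> \<epsilon>2"
    and m1: "continuous_on UNIV m1" "\<And>y. 0 \<le> m1 y" "integral {0..1} m1 = 1"
    and m2: "continuous_on UNIV m2" "\<And>y. 0 \<le> m2 y" "integral {0..1} m2 = 1"
  shows "\<bar>convT A1 m1 x - convT A2 m2 x\<bar> \<le> S * integral {0..1} (\<lambda>y. \<bar>m1 y - m2 y\<bar>) + \<epsilon>1 + \<epsilon>2"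
proof -
  have "convT A1 m1 x - convT A2 m2 x = convT Gk (\<lambda>y. m1 y - m2 y) x
      + convT (\<lambda>z. A1 z - Gk z) m1 x - convT (\<lambda>z. A2 z - Gk z) m2 x"
    using convT_diff_right[OF G(1) m1(1) m2(1), of x] convT_diff_left[OF A(1) G(1) m1(1), of x]
      convT_diff_left[OF A(2) G(1) m2(1), of x] by simp
  moreover have "\<bar>convT Gk (\<lambda>y. m1 y - m2 y) x\<bar> \<le> S * integral {0..1} (\<lambda>y. \<bar>m1 y - m2 y\<bar>)"
    by (intro convT_abs_le G continuous_on_diff m1(1) m2(1))
  moreover have "\<bar>convT (\<lambda>z. A1 z - Gk z) m1 x\<bar> \<le> \<epsilon>1" "\<bar>convT (\<lambda>z. A2 z - Gk z) m2 x\<bar> \<le> \<epsilon>2"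
    by (intro convT_abs_le_density continuous_on_diff A G m1 m2)+
  ultimately show ?thesis by linarith
qed

lemma sup_stability:
  fixes G K1 K2 m1 m2 V :: "real \<Rightarrow> real"
  assumes a: "0 < \<alpha>" and j: "j \<noteq> 0"
    and G: "continuous_on UNIV G" "condM G" "\<And>z. \<bar>G z\<bar> \<le> B"
    and K: "continuous_on UNIV K1" "continuous_on UNIV K2"
    and s1: "solvesP \<alpha> j V K1 m1 H1" and s2: "solvesP \<alpha> j V K2 m2 H2"
    and e1: "\<And>z. \<bar>K1 z - G z\<bar> \<le> \<epsilon>1" and e2: "\<And>z. \<bar>K2 z - G z\<bar> \<le> \<epsilon>2"
    and b: "\<And>x. m1 x \<le> b" "\<And>x. m2 x \<le> b"
    and lo: "0 < lo" and R: "\<And>x. eff_potential K1 V m1 H1 x \<in> {lo..hi}"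
      "\<And>x. eff_potential K2 V m2 H2 x \<in> {lo..hi}"
  defines "c \<equiv> (j\<^sup>2 / 2) * \<alpha> * b powr (- \<alpha> - 1)"
    and "L \<equiv> (j\<^sup>2 / 2) powr (1 / \<alpha>) * ((1 / \<alpha>) * (lo powr (- 1 / \<alpha> - 1) + hi powr (- 1 / \<alpha> - 1)))"
  shows "\<bar>H1 - H2\<bar> \<le> (B / c + 1) * (\<epsilon>1 + \<epsilon>2)"
    and "\<bar>m1 x - m2 x\<bar> \<le> 2 * L * ((B / c + 1) * (\<epsilon>1 + \<epsilon>2))"
proof -
  note n1 = solvesP_D[OF s1] and n2 = solvesP_D[OF s2]
  have "0 < b" using b(1)[of 0] n1(1)[of 0] by linarith
  then have c: "0 < c" unfolding c_def using a j by simp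
  have B0: "0 \<le> B" using G(3)[of 0] by simp
  have L0: "0 \<le> L" unfolding L_def using a by simp
  have L1: "B * integral {0..1} (\<lambda>x. \<bar>m1 x - m2 x\<bar>) \<le> B * ((\<epsilon>1 + \<epsilon>2) / c)"
    unfolding c_def by (intro mult_left_mono L1_stability[OF a j G(1,2) K s1 s2 e1 e2 b] B0)
  have eq: "B * ((\<epsilon>1 + \<epsilon>2) / c) + (\<epsilon>1 + \<epsilon>2) = (B / c + 1) * (\<epsilon>1 + \<epsilon>2)"
    using c by (simp add: field_simps)
  have dist: "\<bar>convT K1 m1 y - convT K2 m2 y\<bar>
      \<le> B * integral {0..1} (\<lambda>x. \<bar>m1 x - m2 x\<bar>) + \<epsilon>1 + \<epsilon>2" for y
    by (rule convT_dist_le[OF G(1,3) K e1 e2 n1(2) less_imp_le[OF n1(1)] n1(4)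
          n2(2) less_imp_le[OF n2(1)] n2(4)])
  have conv: "\<bar>convT K1 m1 y - convT K2 m2 y\<bar> \<le> (B / c + 1) * (\<epsilon>1 + \<epsilon>2)" for y
    using L1 eq dist[of y] by linarith
  show H: "\<bar>H1 - H2\<bar> \<le> (B / c + 1) * (\<epsilon>1 + \<epsilon>2)"
    by (rule H_stability[OF a j s1 s2 conv])
  have "\<bar>eff_potential K1 V m1 H1 x - eff_potential K2 V m2 H2 x\<bar> \<le> 2 * ((B / c + 1) * (\<epsilon>1 + \<epsilon>2))"
    using conv[of x] H unfolding eff_potential_def by linarith
  from mult_left_mono[OF this L0]
  have "\<bar>m1 x - m2 x\<bar> \<le> L * (2 * ((B / c + 1) * (\<epsilon>1 + \<epsilon>2)))"
    using density_stability[OF s1 s2 a j lo R(1)[of x] R(2)[of x], folded L_def] by linarith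
  then show "\<bar>m1 x - m2 x\<bar> \<le> 2 * L * ((B / c + 1) * (\<epsilon>1 + \<epsilon>2))"
    by (simp add: mult_ac)
qed

lemma uniformly_Cauchy_on_of_bound:
  fixes f :: "nat \<Rightarrow> 'a \<Rightarrow> real"
  assumes bound: "\<And>n k x. \<bar>f n x - f k x\<bar> \<le> K * (e n + e k)" and K: "0 \<le> K" and e: "e \<longlonglongrightarrow> 0"
  shows "uniformly_Cauchy_on UNIV f"
proof (rule uniformly_Cauchy_onI)
  fix r :: real assume r: "0 < r"
  define s where "s = r / (2 * (K + 1))"
  have s: "0 < s" "2 * (K + 1) * s = r" unfolding s_def using K r by simp_all
  from order_tendstoD(2)[OF e s(1)] obtain N where N: "\<And>n. n \<ge> N \<Longrightarrow> e n < s"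
    unfolding eventually_sequentially by blast
  have "dist (f n x) (f k x) < r" if "n \<ge> N" "k \<ge> N" for n k x
  proof -
    have "K * (e n + e k) \<le> K * (s + s)"
      using N[OF that(1)] N[OF that(2)] K by (intro mult_left_mono) auto
    also have "\<dots> < 2 * (K + 1) * s" using s(1) by (simp add: algebra_simps)
    finally show ?thesis using bound[of n x k] s(2) by (simp add: dist_real_def)
  qed
  then show "\<exists>M. \<forall>x\<in>UNIV. \<forall>m\<ge>M. \<forall>n\<ge>M. dist (f m x) (f n x) < r" by blast
qed

lemma uniform_limit_of_tendsto:
  fixes f :: "nat \<Rightarrow> 'b::metric_space"
  shows "f \<longlonglongrightarrow> l \<Longrightarrow> uniform_limit S (\<lambda>n x. f n) (\<lambda>x. l) sequentially"
  unfolding uniform_limit_iff tendsto_iff by simp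

lemma bounded_range_of_abs_le:
  fixes f :: "'a \<Rightarrow> real"
  shows "(\<And>x. \<bar>f x\<bar> \<le> B) \<Longrightarrow> bounded (range f)"
  unfolding bounded_iff by auto

lemma bounded_const_comp: "bounded ((\<lambda>x. c) ` S)"
  by (rule bounded_subset[of "{c}"]) auto

lemma bounded_mult_comp:
  fixes f g :: "'a \<Rightarrow> real"
  assumes "bounded (f ` S)" "bounded (g ` S)"
  shows "bounded ((\<lambda>x. f x * g x) ` S)"
proof -
  obtain Bf Bg where "\<And>x. x \<in> S \<Longrightarrow> \<bar>f x\<bar> \<le> Bf" "\<And>x. x \<in> S \<Longrightarrow> \<bar>g x\<bar> \<le> Bg"
    using assms unfolding bounded_iff by auto
  then have "\<bar>f x * g x\<bar> \<le> Bf * Bg" if "x \<in> S" for x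
    unfolding abs_mult using that by (intro mult_mono) (auto intro: order_trans[OF abs_ge_zero])
  then show ?thesis unfolding bounded_iff by auto
qed

lemma uniform_limit_powr:
  fixes fs :: "nat \<Rightarrow> 'a \<Rightarrow> real"
  assumes lim: "uniform_limit UNIV fs f sequentially" and lo: "0 < lo"
    and bounds: "\<And>n x. fs n x \<in> {lo..hi}"
  shows "uniform_limit UNIV (\<lambda>n x. fs n x powr p) (\<lambda>x. f x powr p) sequentially"
proof (rule uniform_limit_compose_uniformly_continuous_on[OF lim _ _ closed_atLeastAtMost])
  have "continuous_on {lo..hi} (\<lambda>t. t powr p)"
    using lo by (intro continuous_on_powr continuous_on_id continuous_on_const) auto
  then show "uniformly_continuous_on {lo..hi} (\<lambda>t. t powr p)"
    by (rule compact_uniformly_continuous) simp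
  show "\<forall>\<^sub>F n in sequentially. \<forall>x\<in>UNIV. fs n x \<in> {lo..hi}" using bounds by simp
qed

section \<open>The approximating sequence\<close>

locale approximating_solutions =
  fixes \<alpha> j :: real and V G :: "real \<Rightarrow> real"
    and Gs ms :: "nat \<Rightarrow> real \<Rightarrow> real" and Hs :: "nat \<Rightarrow> real"
  assumes alpha: "0 < \<alpha>" "\<alpha> \<le> 2" and j: "j \<noteq> 0"
    and V: "C2T V" and G: "C2T G" "condM G" and Gs: "\<And>n. C2T (Gs n)"
    and Gs_lim: "(\<lambda>n. C2norm (\<lambda>x. Gs n x - G x)) \<longlonglongrightarrow> 0"
    and sol: "\<And>n. solvesP \<alpha> j V (Gs n) (ms n) (Hs n)"
begin

definition kernel_err :: "nat \<Rightarrow> real" where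
  "kernel_err n = C2norm (\<lambda>x. Gs n x - G x)"

lemma kernel_err:
  "\<bar>Gs n z - G z\<bar> \<le> kernel_err n" "\<bar>deriv (Gs n) z - deriv G z\<bar> \<le> kernel_err n"
  "\<bar>deriv (deriv (Gs n)) z - deriv (deriv G) z\<bar> \<le> kernel_err n"
  unfolding kernel_err_def by (rule abs_diff_le_C2norm[OF Gs G(1)])+

lemma kernel_err_nonneg: "0 \<le> kernel_err n"
  using kernel_err(1)[of n 0] by linarith

lemma kernel_err_tendsto: "kernel_err \<longlonglongrightarrow> 0"
  using Gs_lim unfolding kernel_err_def[abs_def] .

lemma kernel_bounds:
  obtains B where "\<And>z. \<bar>G z\<bar> \<le> B" "\<And>z. \<bar>deriv G z\<bar> \<le> B" "\<And>z. \<bar>deriv (deriv G) z\<bar> \<le> B"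
    "\<And>n z. \<bar>Gs n z\<bar> \<le> B" "\<And>n z. \<bar>deriv (deriv (Gs n)) z\<bar> \<le> B"
proof -
  obtain BG where BG: "\<And>z. \<bar>G z\<bar> \<le> BG" "\<And>z. \<bar>deriv G z\<bar> \<le> BG" "\<And>z. \<bar>deriv (deriv G) z\<bar> \<le> BG"
    using C2T_bounded[OF G(1)] by blast
  obtain E where E: "\<And>n. norm (kernel_err n) \<le> E"
    using convergent_imp_Bseq[OF convergentI[OF kernel_err_tendsto]] BseqE by metis
  have "\<bar>Gs n z\<bar> \<le> BG + E" "\<bar>deriv (deriv (Gs n)) z\<bar> \<le> BG + E" for n z
    using kernel_err(1,3)[of n z] BG(1,3)[of z] E[of n] by simp_all
  moreover have "0 \<le> E" using E[of 0] by simp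
  ultimately show thesis using BG by (intro that[of "BG + E"]) (simp_all add: add_increasing2)
qed

lemma ms_continuous: "continuous_on UNIV (ms n)"
  and ms_pos: "0 < ms n x"
  and ms_integral: "integral {0..1} (ms n) = 1"
  using solvesP_D[OF sol] by auto

abbreviation potential :: "nat \<Rightarrow> real \<Rightarrow> real" where
  "potential n \<equiv> eff_potential (Gs n) V (ms n) (Hs n)"

lemma potential_bounds:
  obtains lo hi where "0 < lo" "\<And>n x. potential n x \<in> {lo..hi}"
proof -
  obtain B where B: "\<And>n z. \<bar>Gs n z\<bar> \<le> B" "\<And>n z. \<bar>deriv (deriv (Gs n)) z\<bar> \<le> B"
    using kernel_bounds by metis
  obtain BV where BV: "\<And>x. \<bar>V x\<bar> \<le> BV" "\<And>x. \<bar>deriv (deriv V) x\<bar> \<le> BV"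
    using C2T_bounded[OF V] by metis
  define C where "C = B + BV + 1"
  have q: "0 < j\<^sup>2 / 2" using j by simp
  have C: "0 < C" unfolding C_def using B(1)[of 0 0] BV(1)[of 0] by linarith
  have lower: "potential_floor (j\<^sup>2 / 2) C \<le> potential n x" for n x
  proof (rule potential_floor_le[OF alpha q C eff_potential_derivs(1,2)[OF Gs V ms_continuous]])
    show "\<bar>convT (deriv (deriv (Gs n))) (ms n) y - deriv (deriv V) y\<bar> \<le> C" for y
      using convT_abs_le_density[OF C2T_D(6)[OF Gs[of n]] ms_continuous[of n] B(2)[of n]
          less_imp_le[OF ms_pos[of n]] ms_integral[of n], of y] BV(2)[of y]
      unfolding C_def by linarith
    show "0 < potential n y" for y by (rule eff_potential_pos[OF sol j])
    show "periodic1 (potential n)"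
      using periodic1_convT[OF C2T_D(1)[OF Gs], of n "ms n"] C2T_D(1)[OF V]
      unfolding periodic1_def eff_potential_def by simp
    show "ms n y = ((j\<^sup>2 / 2) / potential n y) powr (1 / \<alpha>)" for y
      by (rule density_eq[OF sol alpha(1) j])
  qed (rule ms_continuous, rule ms_integral)
  have upper: "potential n x \<le> j\<^sup>2 / 2 + 2 * BV + 2 * B" for n x
    by (rule eff_potential_le[OF sol alpha(1) j C2T_D(4)[OF Gs] B(1) BV(1)])
  show thesis
    using lower upper potential_floor_pos[OF q C] by (intro that) auto
qed

lemma density_bounds:
  obtains la lb where "0 < la" "\<And>n x. ms n x \<in> {la..lb}"
proof -
  obtain lo hi where lo: "0 < lo" and R: "\<And>n x. potential n x \<in> {lo..hi}"
    using potential_bounds by blast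
  have "0 < lo \<and> lo \<le> hi" using R[of 0 0] lo by simp
  then have "0 < ((j\<^sup>2 / 2) / hi) powr (1 / \<alpha>)" using j by simp
  moreover have "ms n x \<in> {((j\<^sup>2 / 2) / hi) powr (1 / \<alpha>)..((j\<^sup>2 / 2) / lo) powr (1 / \<alpha>)}" for n x
    by (rule density_bounds_of_potential[OF sol alpha(1) j lo R])
  ultimately show thesis by (rule that)
qed

lemma cauchy_bound:
  obtains K where "0 \<le> K" "\<And>n k x. \<bar>ms n x - ms k x\<bar> \<le> K * (kernel_err n + kernel_err k)"
    "\<And>n k. \<bar>Hs n - Hs k\<bar> \<le> K * (kernel_err n + kernel_err k)"
proof -
  obtain B where B: "\<And>z. \<bar>G z\<bar> \<le> B" using kernel_bounds by metis
  obtain lo hi where lo: "0 < lo" and R: "\<And>n x. potential n x \<in> {lo..hi}"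
    using potential_bounds by blast
  obtain la lb where la: "0 < la" and m: "\<And>n x. ms n x \<in> {la..lb}"
    using density_bounds by blast
  define c where "c = (j\<^sup>2 / 2) * \<alpha> * lb powr (- \<alpha> - 1)"
  define L where "L = (j\<^sup>2 / 2) powr (1 / \<alpha>) * ((1 / \<alpha>) * (lo powr (- 1 / \<alpha> - 1) + hi powr (- 1 / \<alpha> - 1)))"
  have "0 < lb" using la m[of 0 0] by simp
  then have c: "0 < c" unfolding c_def using alpha j by simp
  have B0: "0 \<le> B" using B[of 0] by simp
  have L0: "0 \<le> L" unfolding L_def using alpha by simp
  have mb: "\<And>n x. ms n x \<le> lb" using m by simp
  note stability = sup_stability[where b = lb, OF alpha(1) j C2T_D(4)[OF G(1)] G(2) B C2T_D(4)[OF Gs]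
      C2T_D(4)[OF Gs] sol sol kernel_err(1) kernel_err(1) mb mb lo R R, folded c_def L_def]
  show thesis
  proof (rule that)
    show "0 \<le> (2 * L + 1) * (B / c + 1)" using L0 B0 c by simp
    fix n k x
    define P where "P = (B / c + 1) * (kernel_err n + kernel_err k)"
    have P: "0 \<le> P"
      unfolding P_def using B0 c kernel_err_nonneg[of n] kernel_err_nonneg[of k] by simp
    have K: "(2 * L + 1) * (B / c + 1) * (kernel_err n + kernel_err k) = (2 * L + 1) * P"
      unfolding P_def by simp
    have "2 * L * P \<le> (2 * L + 1) * P" "P \<le> (2 * L + 1) * P"
      using P L0 by (simp_all add: algebra_simps)
    moreover have "\<bar>Hs n - Hs k\<bar> \<le> P" "\<bar>ms n x - ms k x\<bar> \<le> 2 * L * P"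
      unfolding P_def by (rule stability)+
    ultimately show "\<bar>ms n x - ms k x\<bar> \<le> (2 * L + 1) * (B / c + 1) * (kernel_err n + kernel_err k)"
      "\<bar>Hs n - Hs k\<bar> \<le> (2 * L + 1) * (B / c + 1) * (kernel_err n + kernel_err k)"
      unfolding K by linarith+
  qed
qed

definition m_lim :: "real \<Rightarrow> real" where
  "m_lim x = lim (\<lambda>n. ms n x)"

definition H_lim :: real where
  "H_lim = lim Hs"

lemma ms_uniform_limit: "uniform_limit UNIV ms m_lim sequentially"
proof -
  obtain K where K: "0 \<le> K" "\<And>n k x. \<bar>ms n x - ms k x\<bar> \<le> K * (kernel_err n + kernel_err k)"
    using cauchy_bound by metis
  have "uniformly_Cauchy_on UNIV ms"
    by (rule uniformly_Cauchy_on_of_bound[OF K(2) K(1) kernel_err_tendsto])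
  then have "uniformly_convergent_on UNIV ms" by (rule Cauchy_uniformly_convergent)
  then show ?thesis unfolding uniformly_convergent_uniform_limit_iff m_lim_def[abs_def] .
qed

lemma Hs_tendsto: "Hs \<longlonglongrightarrow> H_lim"
proof -
  obtain K where K: "0 \<le> K" "\<And>n k. \<bar>Hs n - Hs k\<bar> \<le> K * (kernel_err n + kernel_err k)"
    using cauchy_bound by metis
  have "uniformly_Cauchy_on UNIV (\<lambda>n x :: real. Hs n)"
    by (rule uniformly_Cauchy_on_of_bound[OF K(2) K(1) kernel_err_tendsto])
  from uniformly_Cauchy_imp_Cauchy[OF this UNIV_I] have "convergent Hs"
    by (simp add: Cauchy_convergent)
  then show ?thesis unfolding H_lim_def by (rule convergent_LIMSEQ_iff[THEN iffD1])
qed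

lemma ms_tendsto: "(\<lambda>n. ms n x) \<longlonglongrightarrow> m_lim x"
  by (rule tendsto_uniform_limitI[OF ms_uniform_limit UNIV_I])

lemma m_lim_pos: "0 < m_lim x"
proof -
  obtain la lb where "0 < la" "\<And>n x. ms n x \<in> {la..lb}" using density_bounds by blast
  moreover have "la \<le> m_lim x"
    by (rule tendsto_lowerbound[OF ms_tendsto]) (use calculation in auto)
  ultimately show ?thesis by simp
qed

lemma m_lim_continuous: "continuous_on UNIV m_lim"
  by (rule uniform_limit_theorem[OF _ ms_uniform_limit]) (simp_all add: ms_continuous)

lemma m_lim_periodic: "periodic1 m_lim"
  using solvesP_D(3)[OF sol] unfolding periodic1_def m_lim_def by simp

lemma m_lim_integral: "integral {0..1} m_lim = 1"
proof -
  obtain I J where I: "\<And>n. (ms n has_integral I n) {0..1}" and J: "(m_lim has_integral J) {0..1}"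
    and IJ: "I \<longlonglongrightarrow> J"
    using uniform_limit_integral[OF uniform_limit_on_subset[OF ms_uniform_limit subset_UNIV]
        continuous_on_subset[OF ms_continuous subset_UNIV] sequentially_bot] by metis
  have "I = (\<lambda>n. 1)" using I ms_integral integral_unique by (metis ext)
  with IJ have "J = 1" using LIMSEQ_unique tendsto_const by metis
  with J show ?thesis by (simp add: integral_unique)
qed

lemma convT_uniform_limits:
  "uniform_limit UNIV (\<lambda>n. convT (Gs n) (ms n)) (convT G m_lim) sequentially"
  "uniform_limit UNIV (\<lambda>n. convT (deriv (Gs n)) (ms n)) (convT (deriv G) m_lim) sequentially"
  "uniform_limit UNIV (\<lambda>n. convT (deriv (deriv (Gs n))) (ms n)) (convT (deriv (deriv G)) m_lim) sequentially"
proof -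
  obtain B where B: "\<And>z. \<bar>G z\<bar> \<le> B" "\<And>z. \<bar>deriv G z\<bar> \<le> B" "\<And>z. \<bar>deriv (deriv G) z\<bar> \<le> B"
    using kernel_bounds by metis
  note lim = C2norm_tendsto_zero_imp_uniform_limit[OF Gs G(1) Gs_lim]
  note dens = ms_uniform_limit ms_continuous less_imp_le[OF ms_pos] ms_integral m_lim_continuous
  show "uniform_limit UNIV (\<lambda>n. convT (Gs n) (ms n)) (convT G m_lim) sequentially"
    by (rule uniform_limit_convT[OF lim(1) C2T_D(4)[OF Gs] C2T_D(4)[OF G(1)] B(1) dens])
  show "uniform_limit UNIV (\<lambda>n. convT (deriv (Gs n)) (ms n)) (convT (deriv G) m_lim) sequentially"
    by (rule uniform_limit_convT[OF lim(2) C2T_D(5)[OF Gs] C2T_D(5)[OF G(1)] B(2) dens])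
  show "uniform_limit UNIV (\<lambda>n. convT (deriv (deriv (Gs n))) (ms n)) (convT (deriv (deriv G)) m_lim) sequentially"
    by (rule uniform_limit_convT[OF lim(3) C2T_D(6)[OF Gs] C2T_D(6)[OF G(1)] B(3) dens])
qed

lemma potential_uniform_limit:
  "uniform_limit UNIV potential (eff_potential G V m_lim H_lim) sequentially"
  unfolding eff_potential_def[abs_def]
  by (rule uniform_limit_minus[OF uniform_limit_add[OF convT_uniform_limits(1)
        uniform_limit_of_tendsto[OF Hs_tendsto]] uniform_limit_const])

lemma limit_solves: "solvesP \<alpha> j V G m_lim H_lim"
proof -
  have "j\<^sup>2 / (2 * m_lim x powr \<alpha>) + V x = convT G m_lim x + H_lim" for x
  proof -
    have "(\<lambda>n. potential n x) \<longlonglongrightarrow> eff_potential G V m_lim H_lim x"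
      by (rule tendsto_uniform_limitI[OF potential_uniform_limit UNIV_I])
    moreover have "(\<lambda>n. potential n x) \<longlonglongrightarrow> (j\<^sup>2 / 2) / m_lim x powr \<alpha>"
      unfolding eff_potential_eq[OF sol] using m_lim_pos[of x]
      by (intro tendsto_intros ms_tendsto) auto
    ultimately have "eff_potential G V m_lim H_lim x = (j\<^sup>2 / 2) / m_lim x powr \<alpha>"
      by (rule LIMSEQ_unique)
    then show ?thesis unfolding eff_potential_def by (simp add: field_simps)
  qed
  then show ?thesis
    unfolding solvesP_def CT_def
    using m_lim_periodic m_lim_continuous m_lim_pos m_lim_integral by blast
qed

lemma ms_C2T: "C2T (ms n)"
  by (rule solution_C2T(1)[OF Gs V sol alpha(1) j])

lemma m_lim_C2T: "C2T m_lim"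
  by (rule solution_C2T(1)[OF G(1) V limit_solves alpha(1) j])

lemma deriv_ms_uniform_limits:
  "uniform_limit UNIV (\<lambda>n. deriv (ms n)) (deriv m_lim) sequentially"
  "uniform_limit UNIV (\<lambda>n. deriv (deriv (ms n))) (deriv (deriv m_lim)) sequentially"
proof -
  let ?R = "eff_potential G V m_lim H_lim"
  obtain lo hi where lo: "0 < lo" and R: "\<And>n x. potential n x \<in> {lo..hi}"
    using potential_bounds by blast
  have R_lim: "?R x \<in> {lo..hi}" for x
    using tendsto_uniform_limitI[OF potential_uniform_limit UNIV_I, of x] R
    by (auto intro: tendsto_lowerbound tendsto_upperbound)
  have powr: "uniform_limit UNIV (\<lambda>n x. potential n x powr p) (\<lambda>x. ?R x powr p) sequentially"
    "bounded (range (\<lambda>x. ?R x powr p))" for p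
  proof -
    show "uniform_limit UNIV (\<lambda>n x. potential n x powr p) (\<lambda>x. ?R x powr p) sequentially"
      by (rule uniform_limit_powr[OF potential_uniform_limit lo R])
    show "bounded (range (\<lambda>x. ?R x powr p))"
      using powr_le_powr_sum[OF lo] R_lim by (intro bounded_range_of_abs_le) auto
  qed
  obtain B where B: "\<And>z. \<bar>deriv G z\<bar> \<le> B" "\<And>z. \<bar>deriv (deriv G) z\<bar> \<le> B"
    using kernel_bounds by metis
  obtain BV where BV: "\<And>x. \<bar>deriv V x\<bar> \<le> BV" "\<And>x. \<bar>deriv (deriv V) x\<bar> \<le> BV"
    using C2T_bounded[OF V] by metis
  note dens = m_lim_continuous less_imp_le[OF m_lim_pos] m_lim_integral
  have bounded_derivs: "bounded (range (\<lambda>x. convT (deriv G) m_lim x - deriv V x))"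
    "bounded (range (\<lambda>x. convT (deriv (deriv G)) m_lim x - deriv (deriv V) x))"
    using convT_abs_le_density[OF C2T_D(5)[OF G(1)] m_lim_continuous B(1) dens(2,3)] BV(1)
      convT_abs_le_density[OF C2T_D(6)[OF G(1)] m_lim_continuous B(2) dens(2,3)] BV(2)
    by (auto intro!: bounded_range_of_abs_le[where B = "B + BV"] order_trans[OF abs_triangle_ineq4] add_mono)
  note limits = convT_uniform_limits(2,3)[THEN uniform_limit_minus, OF uniform_limit_const]
  show "uniform_limit UNIV (\<lambda>n. deriv (ms n)) (deriv m_lim) sequentially"
    unfolding solution_C2T(2)[OF Gs V sol alpha(1) j] solution_C2T(2)[OF G(1) V limit_solves alpha(1) j]
    by (intro uniform_lim_mult uniform_limit_const powr limits bounded_mult_comp bounded_const_comp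
        bounded_derivs)
  show "uniform_limit UNIV (\<lambda>n. deriv (deriv (ms n))) (deriv (deriv m_lim)) sequentially"
    unfolding solution_C2T(3)[OF Gs V sol alpha(1) j] solution_C2T(3)[OF G(1) V limit_solves alpha(1) j]
    by (intro uniform_lim_mult uniform_limit_add uniform_limit_const powr limits bounded_mult_comp
        bounded_plus_comp bounded_const_comp bounded_derivs)
qed

lemma C2_convergence: "(\<lambda>n. C2norm (\<lambda>x. ms n x - m_lim x)) \<longlonglongrightarrow> 0"
  by (rule uniform_limit_imp_C2norm_tendsto_zero[OF ms_C2T m_lim_C2T ms_uniform_limit
        deriv_ms_uniform_limits])

end

theorem mainTheorem11:
  fixes \<alpha> j :: real and V G :: "real \<Rightarrow> real"
    and Gs ms :: "nat \<Rightarrow> real \<Rightarrow> real" and Hs :: "nat \<Rightarrow> real"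
  assumes "0 < \<alpha>" "\<alpha> \<le> 2" "j \<noteq> 0"
    and "C2T V" "C2T G" "condM G"
    and "\<And>n. C2T (Gs n)"
    and "(\<lambda>n. C2norm (\<lambda>x. Gs n x - G x)) \<longlonglongrightarrow> 0"
    and "\<And>n. solvesP \<alpha> j V (Gs n) (ms n) (Hs n)"
  shows "\<exists>m H. C2T m \<and> (\<forall>n. C2T (ms n))
           \<and> (\<lambda>n. C2norm (\<lambda>x. ms n x - m x)) \<longlonglongrightarrow> 0
           \<and> Hs \<longlonglongrightarrow> H
           \<and> solvesP \<alpha> j V G m H"
proof -
  interpret approximating_solutions \<alpha> j V G Gs ms Hs
    by unfold_locales (use assms in auto)
  show ?thesis
    using m_lim_C2T ms_C2T C2_convergence Hs_tendsto limit_solves by blast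
qed

end
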